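(* Let $u_0\in L^1(\mathbb R)\cap BV(\mathbb R)$ and assume the CFL condition. For $n\ge0$ and $i\in\mathbb Z$ define $$W_i^n=\hat f(U_i^n,U_{i+1}^n)-D_+A(U_i^n)-b\sum_{l=-\infty}^{i}\sum_{j\in\mathbb Z}G^l_jU_j^n.$$ Then for all $n\ge0$, $$\sup_{i\in\mathbb Z}|W_i^n|\le\sup_{i\in\mathbb Z}|W_i^0|\qquad\text{and}\qquad\sum_{i\in\mathbb Z}|W^n_{i+1}-W^n_i|\le\sum_{i\in\mathbb Z}|W^0_{i+1}-W^0_i|.$$
   Context: Let $f,a:\mathbb R\to\mathbb R$ be Lipschitz, $a\ge0$ bounded, $f(0)=0$, $A(u)=\int_0^ua(s)ds$, $b\ge0$, $\lambda\in(0,1)$, $c_\lambda>0$, $\mathcal L[u](x)=c_\lambda\int_{|z|>0}\frac{u(x+z)-u(x)}{|z|^{1+\lambda}}dz$. Let $\hat f:\mathbb R^2\to\mathbb R$ be $C^1$ and Lipschitz, consistent ($\hat f(u,u)=f(u)$), nondecreasing in its first and nonincreasing in its second argument. Grid: $x_i=i\Delta x$, $I_i=[x_i,x_{i+1})$, $t_n=n\Delta t$. Weights $G^i_j=\int_{I_i}\mathcal L[\mathbf 1_{I_j}](x)dx$; these satisfy $G^i_j\ge0$ for $i\ne j$, $\sum_j|G^i_j|<\infty$, $\sum_iG^i_j=\sum_jG^i_j=0$, $G^i_j=G^j_i$, $G^{i+1}_{j+1}=G^i_j$, and $G^i_i=-d_\lambda\Delta x^{1-\lambda}$ with $d_\lambda=c_\lambda\big(\int_{|z|<1}|z|^{-\lambda}dz+\int_{|z|>1}|z|^{-1-\lambda}dz\big)$.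 $D_\pm U_i=\pm(U_{i\pm1}-U_i)/\Delta x$, $\mathcal L\langle U\rangle_i=\frac1{\Delta x}\sum_jG^i_jU_j$. Scheme: $U_i^{n+1}=U_i^n-\Delta t\,D_-\big[\hat f(U_i^n,U_{i+1}^n)-D_+A(U_i^n)\big]+\Delta t\,b\,\mathcal L\langle U^n\rangle_i$, $U^0_i=\frac1{\Delta x}\int_{I_i}u_0$. CFL condition: $\frac{\Delta t}{\Delta x}(\|\partial_{1}\hat f\|_\infty+\|\partial_{2}\hat f\|_\infty)+\frac{2\Delta t}{\Delta x^2}\|a\|_\infty+b\,d_\lambda\frac{\Delta t}{\Delta x^\lambda}\le1$. *)

theory Defs
  imports "HOL-Analysis.Analysis"
begin

definition cell :: "real \<Rightarrow> int \<Rightarrow> real set" where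
  "cell dx i = {real_of_int i * dx ..< (real_of_int i + 1) * dx}"

definition nonlocalL :: "real \<Rightarrow> real \<Rightarrow> (real \<Rightarrow> real) \<Rightarrow> real \<Rightarrow> real" where
  "nonlocalL c lam u x =
     c * (LINT z:{z. \<bar>z\<bar> > 0}|lborel. (u (x + z) - u x) / (\<bar>z\<bar> powr (1 + lam)))"

definition Gw :: "real \<Rightarrow> real \<Rightarrow> real \<Rightarrow> int \<Rightarrow> int \<Rightarrow> real" where
  "Gw c lam dx i j = (LINT x:cell dx i|lborel. nonlocalL c lam (indicator (cell dx j)) x)"

definition d_lam :: "real \<Rightarrow> real \<Rightarrow> real" where
  "d_lam c lam = c * ((LINT z:{z. \<bar>z\<bar> < 1}|lborel. \<bar>z\<bar> powr (- lam))
                    + (LINT z:{z. \<bar>z\<bar> > 1}|lborel. \<bar>z\<bar> powr (- 1 - lam)))"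

definition Aint :: "(real \<Rightarrow> real) \<Rightarrow> real \<Rightarrow> real" where
  "Aint a u = interval_lebesgue_integral lborel (ereal 0) (ereal u) a"

definition partial1 :: "(real \<Rightarrow> real \<Rightarrow> real) \<Rightarrow> real \<Rightarrow> real \<Rightarrow> real" where
  "partial1 g x y = deriv (\<lambda>s. g s y) x"
definition partial2 :: "(real \<Rightarrow> real \<Rightarrow> real) \<Rightarrow> real \<Rightarrow> real \<Rightarrow> real" where
  "partial2 g x y = deriv (\<lambda>s. g x s) y"

definition C1_2 :: "(real \<Rightarrow> real \<Rightarrow> real) \<Rightarrow> bool" where
  "C1_2 g \<longleftrightarrow>
     (\<forall>x y. (\<lambda>s. g s y) differentiable (at x) \<and> (\<lambda>s. g x s) differentiable (at y)) \<and>
     continuous_on UNIV (\<lambda>p. partial1 g (fst p) (snd p)) \<and>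
     continuous_on UNIV (\<lambda>p. partial2 g (fst p) (snd p))"

definition BV :: "(real \<Rightarrow> real) \<Rightarrow> bool" where
  "BV u \<longleftrightarrow> (\<exists>C. \<forall>\<phi> \<phi>'.
      (\<forall>x. (\<phi> has_real_derivative \<phi>' x) (at x)) \<longrightarrow> continuous_on UNIV \<phi>' \<longrightarrow>
      (\<exists>R. \<forall>x. \<bar>x\<bar> > R \<longrightarrow> \<phi> x = 0) \<longrightarrow> (\<forall>x. \<bar>\<phi> x\<bar> \<le> 1) \<longrightarrow>
      \<bar>LINT x|lborel. u x * \<phi>' x\<bar> \<le> C)"

definition U_init :: "real \<Rightarrow> (real \<Rightarrow> real) \<Rightarrow> int \<Rightarrow> real" where
  "U_init dx u0 i = (1 / dx) * (LINT x:cell dx i|lborel. u0 x)"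

definition flux :: "(real \<Rightarrow> real \<Rightarrow> real) \<Rightarrow> (real \<Rightarrow> real) \<Rightarrow> real \<Rightarrow> (int \<Rightarrow> real) \<Rightarrow> int \<Rightarrow> real" where
  "flux fh A dx U i = fh (U i) (U (i + 1)) - (A (U (i + 1)) - A (U i)) / dx"

definition step :: "(real \<Rightarrow> real \<Rightarrow> real) \<Rightarrow> (real \<Rightarrow> real) \<Rightarrow> (int \<Rightarrow> int \<Rightarrow> real)
     \<Rightarrow> real \<Rightarrow> real \<Rightarrow> real \<Rightarrow> (int \<Rightarrow> real) \<Rightarrow> int \<Rightarrow> real" where
  "step fh A G dx dt b U i =
     U i - dt * (flux fh A dx U i - flux fh A dx U (i - 1)) / dx
         + dt * b * ((1 / dx) * infsum (\<lambda>j. G i j * U j) UNIV)"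

primrec scheme :: "(real \<Rightarrow> real \<Rightarrow> real) \<Rightarrow> (real \<Rightarrow> real) \<Rightarrow> (int \<Rightarrow> int \<Rightarrow> real)
     \<Rightarrow> real \<Rightarrow> real \<Rightarrow> real \<Rightarrow> (int \<Rightarrow> real) \<Rightarrow> nat \<Rightarrow> int \<Rightarrow> real" where
  "scheme fh A G dx dt b U0 0 = U0"
| "scheme fh A G dx dt b U0 (Suc n) = step fh A G dx dt b (scheme fh A G dx dt b U0 n)"

definition Wq :: "(real \<Rightarrow> real \<Rightarrow> real) \<Rightarrow> (real \<Rightarrow> real) \<Rightarrow> (int \<Rightarrow> int \<Rightarrow> real)
     \<Rightarrow> real \<Rightarrow> real \<Rightarrow> (int \<Rightarrow> real) \<Rightarrow> int \<Rightarrow> real" where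
  "Wq fh A G dx b U i = flux fh A dx U i
      - b * infsum (\<lambda>l. infsum (\<lambda>j. G l j * U j) UNIV) {..i}"

end

theory Submission
  imports Defs
begin

(* The proof has three ingredients.
   (1) The weights are translation invariant, G i j = g (j - i), where the stencil g is
       nonnegative off the diagonal, summable, has total sum 0, and
       -g 0 = d_lam c lam * dx powr (1 - lam).  This is computed from the singular kernel
       |z| powr (-1 - lam) by nonnegative Lebesgue integration and monotone convergence.
   (2) With such a stencil the scheme is in conservation form,
       U'_i - U_i = -(dt/dx) (W_i - W_{i-1}),
       so the mean value theorem yields the incremental form
       W'_i = W_i - D_i (W_i - W_{i-1}) + C_i (W_{i+1} - W_i) + (b dt/dx) sum_k g_k W_{i+k}
       with coefficients 0 <= D_i, C_i controlled by the CFL condition.  W'_i is then a convex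
       combination of values of W (maximum principle), and the differences W_{i+1} - W_i
       satisfy a linear recursion with nonnegative coefficients of total mass one per column
       (l1 contraction).
   (3) Induction on the time level. *)

lemma summable_on_abs_real:
  fixes f :: "'a \<Rightarrow> real"
  assumes "f summable_on A"
  shows "(\<lambda>k. \<bar>f k\<bar>) summable_on A"
  using summable_on_iff_abs_summable_on_real[of f A] assms by simp

lemma summable_on_comparison_real:
  fixes f h :: "'a \<Rightarrow> real"
  assumes "h summable_on A" "\<And>i. i \<in> A \<Longrightarrow> \<bar>f i\<bar> \<le> h i"
  shows "f summable_on A"
proof -
  have "(\<lambda>i. norm (f i)) summable_on A"
  proof (rule Infinite_Sum.abs_summable_on_comparison_test)
    show "(\<lambda>i. norm (h i)) summable_on A"
      using assms(1) by (rule summable_on_cong[THEN iffD1, rotated]) (use assms(2) in force)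
  qed (use assms(2) in force)
  then show ?thesis using summable_on_iff_abs_summable_on_real by blast
qed

lemma abs_le_infsum_abs:
  fixes f :: "'a \<Rightarrow> real"
  assumes "f summable_on UNIV"
  shows "\<bar>f k\<bar> \<le> infsum (\<lambda>k. \<bar>f k\<bar>) UNIV"
proof -
  have "infsum (\<lambda>k. \<bar>f k\<bar>) {k} \<le> infsum (\<lambda>k. \<bar>f k\<bar>) UNIV"
    by (rule infsum_mono_neutral) (auto intro: summable_on_abs_real assms)
  then show ?thesis by simp
qed

lemma abs_infsum_le_infsum_abs:
  fixes f :: "'a \<Rightarrow> real"
  assumes "f summable_on UNIV"
  shows "\<bar>infsum f A\<bar> \<le> infsum (\<lambda>l. \<bar>f l\<bar>) UNIV"
proof -
  have abs_A: "(\<lambda>l. \<bar>f l\<bar>) summable_on A"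
    by (rule summable_on_subset[OF summable_on_abs_real[OF assms]]) simp
  have "\<bar>infsum f A\<bar> \<le> infsum (\<lambda>l. \<bar>f l\<bar>) A"
    using norm_infsum_bound[of f A] abs_A by simp
  also have "\<dots> \<le> infsum (\<lambda>l. \<bar>f l\<bar>) UNIV"
    by (rule infsum_mono_neutral) (auto intro: abs_A summable_on_abs_real assms)
  finally show ?thesis .
qed

lemma summable_on_bounded_mult:
  fixes f c :: "'a \<Rightarrow> real"
  assumes "f summable_on UNIV" "\<And>k. \<bar>c k\<bar> \<le> B"
  shows "(\<lambda>k. c k * f k) summable_on A"
proof -
  have "(\<lambda>k. B * \<bar>f k\<bar>) summable_on UNIV"
    using summable_on_abs_real[OF assms(1)] by (rule summable_on_cmult_right)
  then have "(\<lambda>k. c k * f k) summable_on UNIV"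
    by (rule summable_on_comparison_real)
       (use assms(2) in \<open>auto simp: abs_mult intro!: mult_right_mono\<close>)
  then show ?thesis by (rule summable_on_subset) auto
qed

lemma
  fixes f g :: "'a \<Rightarrow> 'b::{topological_ab_group_add,t2_space}"
  assumes "f summable_on A" "g summable_on A"
  shows infsum_diff: "infsum (\<lambda>x. f x - g x) A = infsum f A - infsum g A"
    and summable_on_diff: "(\<lambda>x. f x - g x) summable_on A"
proof -
  have "infsum (\<lambda>x. f x + (- g x)) A = infsum f A + infsum (\<lambda>x. - g x) A"
    by (rule infsum_add) (use assms summable_on_uminus in auto)
  then show "infsum (\<lambda>x. f x - g x) A = infsum f A - infsum g A" by (simp add: infsum_uminus)
  show "(\<lambda>x. f x - g x) summable_on A"
    using summable_on_add[OF assms(1) summable_on_uminus[THEN iffD2, OF assms(2)]] by simp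
qed

lemma has_sum_single_point:
  "((\<lambda>k. if k = a then c else 0) has_sum (c::'b::{topological_comm_monoid_add,t2_space})) UNIV"
  by (rule has_sum_finite_neutralI[of "{a}"]) auto

lemma infsum_ennreal_of_real:
  fixes f :: "'a \<Rightarrow> real"
  assumes "f summable_on A" "\<And>x. x \<in> A \<Longrightarrow> f x \<ge> 0"
  shows "infsum (\<lambda>x. ennreal (f x)) A = ennreal (infsum f A)"
proof -
  have "\<And>F. finite F \<Longrightarrow> F \<subseteq> A \<Longrightarrow> sum (ennreal \<circ> f) F = ennreal (sum f F)"
    by (metis (mono_tags, lifting) comp_def assms(2) subsetD sum.cong sum_ennreal)
  then have "ennreal (infsum f A) = infsum (ennreal \<circ> f) A"
    by (simp add: infsum_comm_additive_general assms(1))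
  then show ?thesis by (simp add: comp_def)
qed

lemma
  fixes f :: "int \<Rightarrow> 'a::{topological_comm_monoid_add,t2_space}"
  shows summable_on_shift_int: "(\<lambda>l. f (l + k)) summable_on UNIV \<longleftrightarrow> f summable_on UNIV"
    and infsum_shift_int: "infsum (\<lambda>l. f (l + k)) UNIV = infsum f UNIV"
  by (rule summable_on_reindex_bij_witness[where j="\<lambda>l. l + k" and i="\<lambda>l. l - k"]; simp)
     (rule infsum_reindex_bij_witness[where j="\<lambda>l. l + k" and i="\<lambda>l. l - k"]; simp)

lemma summable_on_shift_intI:
  fixes f :: "int \<Rightarrow> real"
  assumes "f summable_on UNIV"
  shows "(\<lambda>i. f (i + k)) summable_on UNIV"
  using summable_on_shift_int[of f k] assms by simp

lemma infsum_telescope_int: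
  fixes f :: "int \<Rightarrow> real"
  assumes "f summable_on UNIV"
  shows "infsum (\<lambda>i. f (i + k) - f i) UNIV = 0"
  using infsum_diff[OF summable_on_shift_intI[OF assms] assms] infsum_shift_int[of f k] by simp

lemma infsum_atMost_step:
  fixes f :: "int \<Rightarrow> real"
  assumes "f summable_on UNIV"
  shows "infsum f {..m} = infsum f {..m-1} + f m"
proof -
  have "{..m} = insert m {..m-1}" by auto
  moreover have "f summable_on {..m-1}" by (rule summable_on_subset[OF assms]) auto
  ultimately show ?thesis by (simp add: infsum_insert)
qed

lemma infsum_atMost_shift:
  fixes f :: "int \<Rightarrow> real"
  shows "infsum (\<lambda>l. f (l + k)) {..i} = infsum f {..i+k}"
  by (rule infsum_reindex_bij_witness[where j="\<lambda>l. l + k" and i="\<lambda>l. l - k"]) auto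

lemma partial_sum_of_increments:
  fixes W :: "int \<Rightarrow> real"
  assumes "(\<lambda>j. W j - W (j - 1)) summable_on UNIV"
  obtains L where "\<And>m. W m = L + infsum (\<lambda>j. W j - W (j - 1)) {..m}"
proof -
  define P where "P m = W m - infsum (\<lambda>j. W j - W (j - 1)) {..m}" for m
  have step: "P m = P (m - 1)" for m
    unfolding P_def using infsum_atMost_step[OF assms, of m] by simp
  have "P m = P 0" for m
  proof (induction m rule: int_induct[where k=0])
    case (step1 i) then show ?case using step[of "i + 1"] by simp
  next
    case (step2 i) then show ?case using step[of i] by simp
  qed simp
  then show ?thesis using that[of "P 0"] unfolding P_def by (metis add.commute diff_add_cancel)
qed

section \<open>Correlation with a summable stencil\<close>

text \<open>The discrete correlation of a stencil g with a sequence V, (g \<star> V)_l = \<Sum>_k g_k V_{l+k}.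
  A translation-invariant matrix G i j = g (j - i) acts on V exactly by correlation.\<close>
definition corr :: "(int \<Rightarrow> real) \<Rightarrow> (int \<Rightarrow> real) \<Rightarrow> int \<Rightarrow> real" where
  "corr g V l = infsum (\<lambda>k. g k * V (l + k)) UNIV"

lemma infsum_stencil_eq_corr: "infsum (\<lambda>j. g (j - i) * U j) UNIV = corr g U i"
  unfolding corr_def
  by (rule infsum_reindex_bij_witness[where j="\<lambda>j. j - i" and i="\<lambda>k. i + k"]) auto

lemma corr_cmult: "corr g (\<lambda>j. a * V j) l = a * corr g V l"
  unfolding corr_def by (simp add: infsum_cmult_right' mult.left_commute)

context
  fixes g :: "int \<Rightarrow> real"
  assumes g: "g summable_on UNIV"
begin

lemma corr_term_summable:
  assumes V: "V summable_on UNIV"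
  shows "(\<lambda>k. g k * V (l + k)) summable_on A"
proof -
  have "(\<lambda>k. V (k + l)) summable_on UNIV" by (rule summable_on_shift_intI[OF V])
  then have "(\<lambda>k. g k * V (k + l)) summable_on A"
    by (rule summable_on_bounded_mult) (rule abs_le_infsum_abs[OF g])
  then show ?thesis by (simp add: add.commute)
qed

text \<open>The double family (l, k) \<mapsto> g_k V_{l+k} is absolutely summable (Fubini's hypothesis).\<close>
lemma corr_pairs_summable:
  assumes V: "V summable_on UNIV"
  shows "(\<lambda>(l, k). g k * V (l + k)) summable_on UNIV \<times> UNIV"
proof -
  let ?F = "\<lambda>(k, l). g k * V (l + k)"
  have row_eq: "infsum (\<lambda>l. \<bar>g k * V (l + k)\<bar>) UNIV = \<bar>g k\<bar> * infsum (\<lambda>l. \<bar>V l\<bar>) UNIV" for k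
    using infsum_shift_int[of "\<lambda>l. \<bar>V l\<bar>" k] by (simp add: abs_mult infsum_cmult_right')
  have rows: "(\<lambda>l. norm (?F (k, l))) summable_on UNIV" for k
    using summable_on_cmult_right[OF summable_on_shift_intI[OF summable_on_abs_real[OF V]], of "\<bar>g
        k\<bar>" k] by (simp add: abs_mult)
  have "(\<lambda>k. \<bar>g k\<bar> * infsum (\<lambda>l. \<bar>V l\<bar>) UNIV) summable_on UNIV"
    using summable_on_cmult_left[OF summable_on_abs_real[OF g]] by blast
  moreover have "norm (infsum (\<lambda>l. norm (?F (k, l))) UNIV)
      = \<bar>g k\<bar> * infsum (\<lambda>l. \<bar>V l\<bar>) UNIV" for k
    using row_eq[of k] infsum_nonneg[of UNIV "\<lambda>l. \<bar>V l\<bar>"] by simp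
  ultimately have cols: "(\<lambda>k. norm (infsum (\<lambda>l. norm (?F (k, l))) UNIV)) summable_on UNIV"
    by simp
  have "(\<lambda>x. norm (?F x)) summable_on UNIV \<times> UNIV"
    using Infinite_Sum.abs_summable_on_Sigma_iff[of ?F UNIV "\<lambda>_. UNIV"] rows cols by blast
  then have "?F summable_on UNIV \<times> UNIV"
    using summable_on_iff_abs_summable_on_real by blast
  then show ?thesis
    using summable_on_swap[of ?F UNIV UNIV] by (simp add: case_prod_unfold)
qed

lemma corr_summable:
  assumes V: "V summable_on UNIV"
  shows "corr g V summable_on UNIV"
  unfolding corr_def
  using summable_on_Sigma_banach[of "\<lambda>l k. g k * V (l + k)" UNIV "\<lambda>_. UNIV"]
    corr_pairs_summable[OF V] by simp

lemma corr_diff: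
  assumes "U summable_on UNIV" "V summable_on UNIV"
  shows "corr g (\<lambda>j. U j - V j) l = corr g U l - corr g V l"
  unfolding corr_def
  using infsum_diff[OF corr_term_summable[OF assms(1)] corr_term_summable[OF assms(2)]]
  by (simp add: right_diff_distrib)

lemma infsum_corr_atMost:
  assumes V: "V summable_on UNIV"
  shows "infsum (corr g V) {..i} = infsum (\<lambda>k. g k * infsum V {..i+k}) UNIV"
proof -
  have pairs: "(\<lambda>(l, k). g k * V (l + k)) summable_on {..i} \<times> UNIV"
    by (rule summable_on_subset[OF corr_pairs_summable[OF V]]) auto
  have "infsum (corr g V) {..i} = infsum (\<lambda>l. infsum (\<lambda>k. g k * V (l + k)) UNIV) {..i}"
    unfolding corr_def ..
  also have "\<dots> = infsum (\<lambda>k. infsum (\<lambda>l. g k * V (l + k)) {..i}) UNIV"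
    by (rule infsum_swap_banach) (use pairs in simp)
  also have "\<dots> = infsum (\<lambda>k. g k * infsum V {..i+k}) UNIV"
    by (simp add: infsum_cmult_right' infsum_atMost_shift)
  finally show ?thesis .
qed

lemma infsum_corr:
  assumes V: "V summable_on UNIV"
  shows "infsum (corr g V) UNIV = infsum g UNIV * infsum V UNIV"
proof -
  have "infsum (corr g V) UNIV = infsum (\<lambda>l. infsum (\<lambda>k. g k * V (l + k)) UNIV) UNIV"
    unfolding corr_def ..
  also have "\<dots> = infsum (\<lambda>k. infsum (\<lambda>l. g k * V (l + k)) UNIV) UNIV"
    by (rule infsum_swap_banach) (use corr_pairs_summable[OF V] in simp)
  also have "\<dots> = infsum (\<lambda>k. g k * infsum V UNIV) UNIV"
    by (simp add: infsum_cmult_right' infsum_shift_int)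
  also have "\<dots> = infsum g UNIV * infsum V UNIV" by (rule infsum_cmult_left')
  finally show ?thesis .
qed

lemma abs_corr_le:
  assumes V: "V summable_on UNIV" and g_nonneg: "\<And>k. g k \<ge> 0"
  shows "\<bar>corr g V i\<bar> \<le> corr g (\<lambda>j. \<bar>V j\<bar>) i"
proof -
  have "\<bar>corr g V i\<bar> \<le> infsum (\<lambda>k. \<bar>g k * V (i + k)\<bar>) UNIV"
    unfolding corr_def using norm_infsum_bound[of "\<lambda>k. g k * V (i + k)" UNIV]
      summable_on_abs_real[OF corr_term_summable[OF V]] by simp
  also have "\<dots> = corr g (\<lambda>j. \<bar>V j\<bar>) i"
    unfolding corr_def by (rule infsum_cong) (simp add: abs_mult g_nonneg)
  finally show ?thesis .
qed

end


section \<open>Two stability estimates for linear updates\<close>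

lemma convex_combination_abs_le:
  fixes D C be s w wm wp H M :: real
  assumes "0 \<le> D" "0 \<le> C" "0 \<le> be" "D + C + be * s \<le> 1"
    and "\<bar>w\<bar> \<le> M" "\<bar>wm\<bar> \<le> M" "\<bar>wp\<bar> \<le> M" "\<bar>H\<bar> \<le> s * M"
  shows "\<bar>(1 - D - C - be * s) * w + D * wm + C * wp + be * H\<bar> \<le> M"
proof -
  have triangle: "\<bar>P + Q + R + S\<bar> \<le> \<bar>P\<bar> + \<bar>Q\<bar> + \<bar>R\<bar> + \<bar>S\<bar>" for P Q R S :: real by arith
  have "\<bar>(1 - D - C - be * s) * w\<bar> \<le> (1 - D - C - be * s) * M"
    using assms(4,5) by (simp add: abs_mult mult_left_mono)
  moreover have "\<bar>D * wm\<bar> \<le> D * M" using assms(1,6) by (simp add: abs_mult mult_left_mono)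
  moreover have "\<bar>C * wp\<bar> \<le> C * M" using assms(2,7) by (simp add: abs_mult mult_left_mono)
  moreover have "\<bar>be * H\<bar> \<le> be * (s * M)" using assms(3,8) by (simp add: abs_mult mult_left_mono)
  moreover have "(1 - D - C - be * s) * M + D * M + C * M + be * (s * M) = M"
    by (simp add: algebra_simps)
  ultimately show ?thesis
    using triangle[of "(1 - D - C - be * s) * w" "D * wm" "C * wp" "be * H"] by linarith
qed

text \<open>Mass balance of the recursion
  Y'_i = (1 - C_i - D_{i+1} - be \<Sum>h) Y_i + C_{i+1} Y_{i+1} + D_i Y_{i-1} + be (h \<star> Y)_i:
  the coefficients of each Y_j add up to one, so \<Sum>Y' = \<Sum>Y.  This is seen by splitting Y'
  into Y, two telescoping differences, and a correlation term of zero total sum.\<close>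
lemma stencil_recursion_has_sum:
  fixes Y D C h :: "int \<Rightarrow> real" and be BD BC :: real
  assumes Y: "Y summable_on UNIV" and h: "h summable_on UNIV"
    and D: "\<And>i. \<bar>D i\<bar> \<le> BD" and C: "\<And>i. \<bar>C i\<bar> \<le> BC"
  shows "((\<lambda>i. (1 - C i - D (i + 1) - be * infsum h UNIV) * Y i + C (i + 1) * Y (i + 1)
            + D i * Y (i - 1) + be * corr h Y i) has_sum infsum Y UNIV) UNIV"
proof -
  define s where "s = infsum h UNIV"
  define f1 where "f1 i = C i * Y i" for i
  define f2 where "f2 i = D (i + 1) * Y i" for i
  have f1: "f1 summable_on UNIV" unfolding f1_def by (rule summable_on_bounded_mult[OF Y C])
  have f2: "f2 summable_on UNIV" unfolding f2_def by (rule summable_on_bounded_mult[OF Y D])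
  have corr_Y: "corr h Y summable_on UNIV" by (rule corr_summable[OF h Y])
  have sY: "(\<lambda>i. s * Y i) summable_on UNIV" by (rule summable_on_cmult_right[OF Y])
  have "((\<lambda>i. f1 (i + 1) - f1 i) has_sum 0) UNIV"
    using has_sum_infsum[OF summable_on_diff[OF summable_on_shift_intI[OF f1, of 1] f1]]
      infsum_telescope_int[OF f1, of 1] by simp
  moreover have "((\<lambda>i. f2 (i - 1) - f2 i) has_sum 0) UNIV"
    using has_sum_infsum[OF summable_on_diff[OF summable_on_shift_intI[OF f2, of "- 1"] f2]]
      infsum_telescope_int[OF f2, of "- 1"] by simp
  moreover have "((\<lambda>i. be * (corr h Y i - s * Y i)) has_sum 0) UNIV"
    using has_sum_cmult_right[OF has_sum_infsum[OF summable_on_diff[OF corr_Y sY]], of be]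
      infsum_diff[OF corr_Y sY] infsum_corr[OF h Y]
    by (simp add: infsum_cmult_right' s_def)
  ultimately have "((\<lambda>i. Y i + (f1 (i + 1) - f1 i) + (f2 (i - 1) - f2 i)
      + be * (corr h Y i - s * Y i)) has_sum (infsum Y UNIV + 0 + 0 + 0)) UNIV"
    by (intro has_sum_add has_sum_infsum[OF Y])
  then show ?thesis
    unfolding s_def f1_def f2_def by (simp add: algebra_simps)
qed

text \<open>l1 contraction: with nonnegative coefficients, the recursion above does not
  increase \<Sum>|Y_i|, since |Y'| is dominated by the recursion applied to |Y|.\<close>
lemma l1_contraction:
  fixes X D C h :: "int \<Rightarrow> real" and be BD BC :: real
  assumes X: "X summable_on UNIV"
    and h: "h summable_on UNIV" "\<And>k. h k \<ge> 0"
    and D: "\<And>i. 0 \<le> D i \<and> D i \<le> BD" and C: "\<And>i. 0 \<le> C i \<and> C i \<le> BC"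
    and be: "be \<ge> 0"
    and cfl: "\<And>i. C i + D (i + 1) + be * infsum h UNIV \<le> 1"
  shows "infsum (\<lambda>i. \<bar>(1 - C i - D (i + 1) - be * infsum h UNIV) * X i + C (i + 1) * X (i + 1)
            + D i * X (i - 1) + be * corr h X i\<bar>) UNIV
         \<le> infsum (\<lambda>i. \<bar>X i\<bar>) UNIV"
proof -
  define E where "E i = 1 - C i - D (i + 1) - be * infsum h UNIV" for i
  define R where "R i = E i * \<bar>X i\<bar> + C (i + 1) * \<bar>X (i + 1)\<bar> + D i * \<bar>X (i - 1)\<bar>
      + be * corr h (\<lambda>j. \<bar>X j\<bar>) i" for i
  have R: "(R has_sum infsum (\<lambda>i. \<bar>X i\<bar>) UNIV) UNIV"
    unfolding R_def E_def
    by (rule stencil_recursion_has_sum[OF summable_on_abs_real[OF X] h(1)])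
       (use D C in \<open>force simp: abs_le_iff\<close>)+
  have bound: "\<bar>E i * X i + C (i + 1) * X (i + 1) + D i * X (i - 1) + be * corr h X i\<bar> \<le> R i"
    for i
  proof -
    have triangle: "\<bar>P + Q + S + T\<bar> \<le> \<bar>P\<bar> + \<bar>Q\<bar> + \<bar>S\<bar> + \<bar>T\<bar>" for P Q S T :: real by arith
    have "E i \<ge> 0" using cfl[of i] unfolding E_def by simp
    then have "\<bar>E i * X i\<bar> = E i * \<bar>X i\<bar>" by (simp add: abs_mult)
    moreover have "\<bar>C (i + 1) * X (i + 1)\<bar> = C (i + 1) * \<bar>X (i + 1)\<bar>"
      using C[of "i + 1"] by (simp add: abs_mult)
    moreover have "\<bar>D i * X (i - 1)\<bar> = D i * \<bar>X (i - 1)\<bar>" using D[of i] by (simp add: abs_mult)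
    moreover have "\<bar>be * corr h X i\<bar> \<le> be * corr h (\<lambda>j. \<bar>X j\<bar>) i"
      using abs_corr_le[OF h(1) X h(2), of i] be by (simp add: abs_mult mult_left_mono)
    ultimately show ?thesis
      unfolding R_def
      using triangle[of "E i * X i" "C (i + 1) * X (i + 1)" "D i * X (i - 1)" "be * corr h X i"]
      by linarith
  qed
  have lhs: "(\<lambda>i. \<bar>E i * X i + C (i + 1) * X (i + 1) + D i * X (i - 1) + be * corr h X i\<bar>)
      summable_on UNIV"
    by (rule summable_on_comparison_real[OF has_sum_imp_summable[OF R]]) (use bound in simp)
  show ?thesis
    using infsum_mono[OF lhs has_sum_imp_summable[OF R] bound] infsumI[OF R]
    unfolding E_def by linarith
qed

section \<open>The scheme with a translation-invariant stencil\<close>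

text \<open>Abstract setting: the convective flux fh is nondecreasing in its first and
  nonincreasing in its second argument with slopes at most p1 and p2, the diffusion
  primitive A is nondecreasing with slope at most al, and the weight matrix is
  G i j = g (j - i) for a summable stencil g, nonnegative off the diagonal, of total sum 0.
  Slopes are expressed through the difference-quotient form of the mean value theorem.\<close>
locale monotone_stencil_scheme =
  fixes fh :: "real \<Rightarrow> real \<Rightarrow> real" and A :: "real \<Rightarrow> real" and g :: "int \<Rightarrow> real"
    and dx dt b p1 p2 al :: real
  assumes dx_pos: "dx > 0" and dt_pos: "dt > 0" and b_nonneg: "b \<ge> 0"
    and fh_slope1: "\<And>x x' y. \<exists>q. 0 \<le> q \<and> q \<le> p1 \<and> fh x' y - fh x y = q * (x' - x)"
    and fh_slope2: "\<And>x y y'. \<exists>q. 0 \<le> q \<and> q \<le> p2 \<and> fh x y' - fh x y = - q * (y' - y)"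
    and A_slope: "\<And>u v. \<exists>q. 0 \<le> q \<and> q \<le> al \<and> A v - A u = q * (v - u)"
    and fh_zero: "fh 0 0 = 0" and A_zero: "A 0 = 0"
    and g_summable: "g summable_on UNIV" and g_total: "infsum g UNIV = 0"
    and g_offdiag_nonneg: "\<And>k. k \<noteq> 0 \<Longrightarrow> g k \<ge> 0"
    and cfl: "dt / dx * (p1 + p2) + 2 * dt / dx\<^sup>2 * al + b * dt / dx * (- g 0) \<le> 1"
begin

definition W_of :: "(int \<Rightarrow> real) \<Rightarrow> int \<Rightarrow> real" where
  "W_of U = Wq fh A (\<lambda>l j. g (j - l)) dx b U"

definition advance :: "(int \<Rightarrow> real) \<Rightarrow> int \<Rightarrow> real" where
  "advance U = step fh A (\<lambda>l j. g (j - l)) dx dt b U"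

definition g_off :: "int \<Rightarrow> real" where
  "g_off k = (if k = 0 then 0 else g k)"

lemma g_off_nonneg: "g_off k \<ge> 0"
  unfolding g_off_def using g_offdiag_nonneg by auto

lemma g_off_summable: "g_off summable_on UNIV"
  by (rule summable_on_comparison_real[OF summable_on_abs_real[OF g_summable]])
     (simp add: g_off_def)

lemma has_sum_g_off: "(g_off has_sum (- g 0)) UNIV"
proof -
  have "(\<lambda>k. g k + - (if k = 0 then g 0 else 0)) = g_off"
    by (auto simp: g_off_def)
  then show ?thesis
    using has_sum_add[OF has_sum_infsum[OF g_summable]
        has_sum_uminusI[OF has_sum_single_point[of 0 "g 0"]]] g_total by simp
qed

lemma g_off_total: "infsum g_off UNIV = - g 0"
  using has_sum_g_off by (rule infsumI)

lemma cfl_split: "dt/dx * (p1 + al/dx) + dt/dx * (p2 + al/dx) + b * dt/dx * (- g 0) \<le> 1"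
proof -
  have "dt/dx * (p1 + al/dx) + dt/dx * (p2 + al/dx) = dt/dx * (p1 + p2) + 2 * dt/dx\<^sup>2 * al"
    using dx_pos by (simp add: field_simps power2_eq_square)
  then show ?thesis using cfl by simp
qed

lemma stencil_split:
  fixes W :: "int \<Rightarrow> real"
  assumes bounded: "\<And>m. \<bar>W m\<bar> \<le> B"
  shows "(\<lambda>k. g_off k * W (i + k)) summable_on UNIV"
    and "infsum (\<lambda>k. g k * W (i + k)) UNIV
           = infsum (\<lambda>k. g_off k * W (i + k)) UNIV - (- g 0) * W i"
proof -
  show off: "(\<lambda>k. g_off k * W (i + k)) summable_on UNIV"
    using summable_on_bounded_mult[OF g_off_summable bounded, of "\<lambda>k. i + k"]
    by (simp add: mult.commute)
  have "infsum (\<lambda>k. g k * W (i + k)) UNIV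
      = infsum (\<lambda>k. g_off k * W (i + k) + (if k = 0 then g 0 * W i else 0)) UNIV"
    by (rule infsum_cong) (simp add: g_off_def)
  also have "\<dots> = infsum (\<lambda>k. g_off k * W (i + k)) UNIV + g 0 * W i"
    using infsum_add[OF off has_sum_imp_summable[OF has_sum_single_point]]
      infsumI[OF has_sum_single_point, of 0 "g 0 * W i"] by simp
  finally show "infsum (\<lambda>k. g k * W (i + k)) UNIV
      = infsum (\<lambda>k. g_off k * W (i + k)) UNIV - (- g 0) * W i" by simp
qed

lemma fh_bound: "\<bar>fh x y\<bar> \<le> p1 * \<bar>x\<bar> + p2 * \<bar>y\<bar>"
proof -
  obtain q where q: "0 \<le> q" "q \<le> p1" "fh x 0 - fh 0 0 = q * (x - 0)" using fh_slope1 by blast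
  obtain r where r: "0 \<le> r" "r \<le> p2" "fh x y - fh x 0 = - r * (y - 0)" using fh_slope2 by blast
  have "\<bar>fh x y\<bar> = \<bar>q * x - r * y\<bar>" using q(3) r(3) fh_zero by (simp add: algebra_simps)
  also have "\<dots> \<le> q * \<bar>x\<bar> + r * \<bar>y\<bar>"
    using q r by (simp add: abs_mult order_trans[OF abs_triangle_ineq4])
  also have "\<dots> \<le> p1 * \<bar>x\<bar> + p2 * \<bar>y\<bar>" using q r by (intro add_mono mult_right_mono) auto
  finally show ?thesis .
qed

lemma A_bound: "\<bar>A v\<bar> \<le> al * \<bar>v\<bar>"
proof -
  obtain q where q: "0 \<le> q" "q \<le> al" "A v - A 0 = q * (v - 0)" using A_slope by blast
  then have "\<bar>A v\<bar> = q * \<bar>v\<bar>" using A_zero by (simp add: abs_mult)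
  then show ?thesis using q by (simp add: mult_right_mono)
qed

lemma flux_summable:
  assumes U: "U summable_on UNIV"
  shows "flux fh A dx U summable_on UNIV"
proof (rule summable_on_comparison_real)
  let ?h = "\<lambda>i. p1 * \<bar>U i\<bar> + p2 * \<bar>U (i + 1)\<bar> + (1/dx) * (al * \<bar>U (i + 1)\<bar> + al * \<bar>U i\<bar>)"
  have a0: "(\<lambda>i. \<bar>U i\<bar>) summable_on UNIV" by (rule summable_on_abs_real[OF U])
  have a1: "(\<lambda>i. \<bar>U (i + 1)\<bar>) summable_on UNIV" by (rule summable_on_shift_intI[OF a0])
  show "?h summable_on UNIV" by (intro summable_on_add summable_on_cmult_right a0 a1)
  show "\<bar>flux fh A dx U i\<bar> \<le> ?h i" for i
  proof -
    have "\<bar>flux fh A dx U i\<bar> \<le> \<bar>fh (U i) (U (i + 1))\<bar> + (\<bar>A (U (i + 1))\<bar> + \<bar>A (U i)\<bar>) / dx"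
      unfolding flux_def using dx_pos
      by (simp add: divide_right_mono order.trans[OF abs_triangle_ineq4 add_left_mono]
          order_trans[OF abs_triangle_ineq4])
    also have "\<dots> \<le> p1 * \<bar>U i\<bar> + p2 * \<bar>U (i + 1)\<bar> + (al * \<bar>U (i + 1)\<bar> + al * \<bar>U i\<bar>) / dx"
      using fh_bound[of "U i" "U (i + 1)"] A_bound[of "U (i + 1)"] A_bound[of "U i"] dx_pos
      by (intro add_mono divide_right_mono) auto
    finally show ?thesis by simp
  qed
qed

lemma W_of_corr: "W_of U i = flux fh A dx U i - b * infsum (corr g U) {..i}"
  unfolding W_of_def Wq_def using infsum_stencil_eq_corr[of g _ U] by simp

lemma advance_corr:
  "advance U i = U i - dt/dx * (flux fh A dx U i - flux fh A dx U (i - 1)) + b * dt/dx * corr g U i"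
  unfolding advance_def step_def using infsum_stencil_eq_corr[of g i U] by simp

context
  fixes U :: "int \<Rightarrow> real"
  assumes U: "U summable_on UNIV"
begin

lemma advance_summable: "advance U summable_on UNIV"
proof -
  have F: "flux fh A dx U summable_on UNIV" by (rule flux_summable[OF U])
  have "(\<lambda>i. U i - dt/dx * (flux fh A dx U i - flux fh A dx U (i - 1)) + b * dt/dx * corr g U i)
      summable_on UNIV"
    using summable_on_shift_intI[OF F, of "- 1"]
    by (intro summable_on_add summable_on_cmult_right summable_on_diff U F
        corr_summable[OF g_summable U]) simp
  then show ?thesis by (simp add: advance_corr[abs_def])
qed

text \<open>Conservation form: the nonlocal term is the increment of the partial sums in W.\<close>
lemma conservation_form: "advance U j - U j = - (dt/dx) * (W_of U j - W_of U (j - 1))"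
proof -
  have "infsum (corr g U) {..j} = infsum (corr g U) {..j - 1} + corr g U j"
    by (rule infsum_atMost_step[OF corr_summable[OF g_summable U]])
  then show ?thesis unfolding advance_corr W_of_corr by (simp add: algebra_simps)
qed

lemma W_increment_summable: "(\<lambda>j. W_of U j - W_of U (j - 1)) summable_on UNIV"
proof -
  have "(\<lambda>j. (- (dx/dt)) * (advance U j - U j)) summable_on UNIV"
    by (intro summable_on_cmult_right summable_on_diff advance_summable U)
  moreover have "(- (dx/dt)) * (advance U j - U j) = W_of U j - W_of U (j - 1)" for j
    using conservation_form[of j] dx_pos dt_pos by (simp add: field_simps)
  ultimately show ?thesis by simp
qed

lemma W_difference_summable: "(\<lambda>i. W_of U (i + 1) - W_of U i) summable_on UNIV"
  using summable_on_shift_intI[OF W_increment_summable, of 1] by simp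

lemma W_bounded: obtains B where "\<And>m. \<bar>W_of U m\<bar> \<le> B"
proof -
  obtain L where L: "\<And>m. W_of U m = L + infsum (\<lambda>j. W_of U j - W_of U (j - 1)) {..m}"
    using partial_sum_of_increments[OF W_increment_summable] by blast
  have "\<bar>W_of U m\<bar> \<le> \<bar>L\<bar> + infsum (\<lambda>j. \<bar>W_of U j - W_of U (j - 1)\<bar>) UNIV" for m
    using L[of m] abs_infsum_le_infsum_abs[OF W_increment_summable, of "{..m}"] by linarith
  then show ?thesis using that by blast
qed

text \<open>By the conservation form, the nonlocal term of the update is the correlation of g
  with the increments of W.\<close>
lemma corr_advance_difference:
  "corr g (advance U) l - corr g U l = - (dt/dx) * corr g (\<lambda>j. W_of U j - W_of U (j - 1)) l"
proof -
  have "corr g (advance U) l - corr g U l = corr g (\<lambda>j. advance U j - U j) l"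
    by (rule corr_diff[OF g_summable advance_summable U, symmetric])
  then show ?thesis
    using corr_cmult[of g "- (dt/dx)" "\<lambda>j. W_of U j - W_of U (j - 1)" l]
    by (simp add: conservation_form)
qed

text \<open>The change of the nonlocal part of W is the correlation of g with W itself:
  summing the increments by parts, the constant of integration drops out since \<Sum>g = 0.\<close>
lemma nonlocal_part_update:
  "infsum (corr g (advance U)) {..i} - infsum (corr g U) {..i}
     = - (dt/dx) * infsum (\<lambda>k. g k * W_of U (i + k)) UNIV"
proof -
  let ?D = "\<lambda>j. W_of U j - W_of U (j - 1)"
  obtain L where L: "\<And>m. W_of U m = L + infsum ?D {..m}"
    using partial_sum_of_increments[OF W_increment_summable] by blast
  obtain B where B: "\<And>m. \<bar>W_of U m\<bar> \<le> B" using W_bounded by blast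
  have gW: "(\<lambda>k. g k * W_of U (i + k)) summable_on UNIV"
    using summable_on_bounded_mult[OF g_summable B, of "\<lambda>k. i + k"] by (simp add: mult.commute)
  have "infsum (corr g (advance U)) {..i} - infsum (corr g U) {..i}
      = infsum (\<lambda>l. corr g (advance U) l - corr g U l) {..i}"
    by (rule infsum_diff[symmetric])
       (intro summable_on_subset[OF corr_summable[OF g_summable]] advance_summable U; simp)+
  also have "\<dots> = - (dt/dx) * infsum (corr g ?D) {..i}"
    unfolding corr_advance_difference by (rule infsum_cmult_right')
  also have "infsum (corr g ?D) {..i} = infsum (\<lambda>k. g k * infsum ?D {..i+k}) UNIV"
    by (rule infsum_corr_atMost[OF g_summable W_increment_summable])
  also have "\<dots> = infsum (\<lambda>k. g k * W_of U (i + k) - L * g k) UNIV"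
  proof (rule infsum_cong)
    fix k
    have sum_D: "infsum ?D {..i+k} = W_of U (i + k) - L" using L[of "i + k"] by linarith
    show "g k * infsum ?D {..i+k} = g k * W_of U (i + k) - L * g k"
      unfolding sum_D by (simp add: algebra_simps)
  qed
  also have "\<dots> = infsum (\<lambda>k. g k * W_of U (i + k)) UNIV"
    using infsum_diff[OF gW summable_on_cmult_right[OF g_summable, of L]] g_total
    by (simp add: infsum_cmult_right')
  finally show ?thesis .
qed

end

end

lemma flux_difference_by_slopes:
  assumes Q1: "fh (V i) (U (i + 1)) - fh (U i) (U (i + 1)) = q1 * (V i - U i)"
    and Q2: "fh (V i) (V (i + 1)) - fh (V i) (U (i + 1)) = - q2 * (V (i + 1) - U (i + 1))"
    and QA0: "A (V i) - A (U i) = qa0 * (V i - U i)"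
    and QA1: "A (V (i + 1)) - A (U (i + 1)) = qa1 * (V (i + 1) - U (i + 1))"
  shows "flux fh A dx V i - flux fh A dx U i
           = (q1 + qa0 / dx) * (V i - U i) - (q2 + qa1 / dx) * (V (i + 1) - U (i + 1))"
proof -
  have "flux fh A dx V i - flux fh A dx U i
      = (fh (V i) (V (i + 1)) - fh (V i) (U (i + 1))) + (fh (V i) (U (i + 1)) - fh (U i) (U (i
          + 1)))
        - ((A (V (i + 1)) - A (U (i + 1))) - (A (V i) - A (U i))) / dx"
    unfolding flux_def by (simp add: diff_divide_distrib)
  also have "\<dots> = - q2 * (V (i + 1) - U (i + 1)) + q1 * (V i - U i)
      - (qa1 * (V (i + 1) - U (i + 1)) - qa0 * (V i - U i)) / dx"
    unfolding Q1 Q2 QA0 QA1 ..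
  finally show ?thesis by (simp add: algebra_simps diff_divide_distrib add_divide_distrib)
qed

context monotone_stencil_scheme
begin

text \<open>Incremental form of the flux difference between two states (Harten's lemma):
  by the mean value theorem the change of the numerical flux is a nonnegative combination
  of the changes of the state in the cells i and i+1, with coefficients bounded via CFL.\<close>
lemma flux_difference_incremental:
  fixes U V :: "int \<Rightarrow> real"
  obtains D C where "\<And>i. 0 \<le> D i \<and> D i \<le> dt/dx * (p1 + al/dx)"
    and "\<And>i. 0 \<le> C i \<and> C i \<le> dt/dx * (p2 + al/dx)"
    and "\<And>i. flux fh A dx V i - flux fh A dx U i
               = (dx/dt) * (D i * (V i - U i) - C i * (V (i + 1) - U (i + 1)))"
proof -
  have "\<forall>i. \<exists>q. 0 \<le> q \<and> q \<le> p1
      \<and> fh (V i) (U (i + 1)) - fh (U i) (U (i + 1)) = q * (V i - U i)"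
    using fh_slope1 by blast
  then obtain Q1 where Q1: "\<And>i. 0 \<le> Q1 i \<and> Q1 i \<le> p1
      \<and> fh (V i) (U (i + 1)) - fh (U i) (U (i + 1)) = Q1 i * (V i - U i)"
    by metis
  have "\<forall>i. \<exists>q. 0 \<le> q \<and> q \<le> p2
      \<and> fh (V i) (V (i + 1)) - fh (V i) (U (i + 1)) = - q * (V (i + 1) - U (i + 1))"
    using fh_slope2 by blast
  then obtain Q2 where Q2: "\<And>i. 0 \<le> Q2 i \<and> Q2 i \<le> p2
      \<and> fh (V i) (V (i + 1)) - fh (V i) (U (i + 1)) = - Q2 i * (V (i + 1) - U (i + 1))"
    by metis
  have "\<forall>i. \<exists>q. 0 \<le> q \<and> q \<le> al \<and> A (V i) - A (U i) = q * (V i - U i)"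
    using A_slope by blast
  then obtain QA where QA: "\<And>i. 0 \<le> QA i \<and> QA i \<le> al \<and> A (V i) - A (U i) = QA i * (V i - U i)"
    by metis
  define D where "D i = dt/dx * (Q1 i + QA i / dx)" for i
  define C where "C i = dt/dx * (Q2 i + QA (i + 1) / dx)" for i
  have "0 \<le> D i \<and> D i \<le> dt/dx * (p1 + al/dx)" for i
    unfolding D_def using Q1[of i] QA[of i] dx_pos dt_pos
    by (auto intro!: mult_left_mono add_mono divide_right_mono)
  moreover have "0 \<le> C i \<and> C i \<le> dt/dx * (p2 + al/dx)" for i
    unfolding C_def using Q2[of i] QA[of "i + 1"] dx_pos dt_pos
    by (auto intro!: mult_left_mono add_mono divide_right_mono)
  moreover have "flux fh A dx V i - flux fh A dx U i
      = (dx/dt) * (D i * (V i - U i) - C i * (V (i + 1) - U (i + 1)))" for i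
    unfolding flux_difference_by_slopes[OF conjunct2[OF conjunct2[OF Q1]]
        conjunct2[OF conjunct2[OF Q2]] conjunct2[OF conjunct2[OF QA]]
        conjunct2[OF conjunct2[OF QA[of "i + 1"]]]]
    unfolding D_def C_def using dx_pos dt_pos by (simp add: field_simps)
  ultimately show ?thesis using that by blast
qed

context
  fixes U :: "int \<Rightarrow> real"
  assumes U: "U summable_on UNIV"
begin

lemma W_update:
  obtains D C :: "int \<Rightarrow> real" where "\<And>i. 0 \<le> D i \<and> D i \<le> dt/dx * (p1 + al/dx)"
    and "\<And>i. 0 \<le> C i \<and> C i \<le> dt/dx * (p2 + al/dx)"
    and "\<And>i. W_of (advance U) i = W_of U i - D i * (W_of U i - W_of U (i - 1))
               + C i * (W_of U (i + 1) - W_of U i)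
               + b * dt/dx * (corr g_off (W_of U) i - (- g 0) * W_of U i)"
proof -
  obtain D C where D: "\<And>i. 0 \<le> D i \<and> D i \<le> dt/dx * (p1 + al/dx)"
    and C: "\<And>i. 0 \<le> C i \<and> C i \<le> dt/dx * (p2 + al/dx)"
    and dflux: "\<And>i. flux fh A dx (advance U) i - flux fh A dx U i
      = (dx/dt) * (D i * (advance U i - U i) - C i * (advance U (i + 1) - U (i + 1)))"
    using flux_difference_incremental by blast
  obtain B where B: "\<And>m. \<bar>W_of U m\<bar> \<le> B" using W_bounded[OF U] by blast
  have "W_of (advance U) i = W_of U i - D i * (W_of U i - W_of U (i - 1))
      + C i * (W_of U (i + 1) - W_of U i)
      + b * dt/dx * (corr g_off (W_of U) i - (- g 0) * W_of U i)" for i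
  proof -
    have "W_of (advance U) i - W_of U i
        = (flux fh A dx (advance U) i - flux fh A dx U i) - b
            * (infsum (corr g (advance U)) {..i} - infsum (corr g U) {..i})"
      unfolding W_of_corr by (simp add: algebra_simps)
    also have "\<dots> = - D i * (W_of U i - W_of U (i - 1)) + C i * (W_of U (i + 1) - W_of U i)
        + b * dt/dx * infsum (\<lambda>k. g k * W_of U (i + k)) UNIV"
      unfolding dflux nonlocal_part_update[OF U] conservation_form[OF U]
        conservation_form[OF U, of "i + 1"]
      using dx_pos dt_pos by (simp add: field_simps)
    finally show ?thesis
      using stencil_split(2)[where W="W_of U" and i=i, OF B] unfolding corr_def by simp
  qed
  then show ?thesis using that D C by blast
qed

lemma max_principle_step:
  assumes M: "\<And>i. \<bar>W_of U i\<bar> \<le> M"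
  shows "\<bar>W_of (advance U) i\<bar> \<le> M"
proof -
  obtain D C where D: "\<And>i. 0 \<le> D i \<and> D i \<le> dt/dx * (p1 + al/dx)"
    and C: "\<And>i. 0 \<le> C i \<and> C i \<le> dt/dx * (p2 + al/dx)"
    and update: "\<And>i. W_of (advance U) i = W_of U i - D i * (W_of U i - W_of U (i - 1))
      + C i * (W_of U (i + 1) - W_of U i)
      + b * dt/dx * (corr g_off (W_of U) i - (- g 0) * W_of U i)"
    using W_update by blast
  have terms: "(\<lambda>k. g_off k * W_of U (i + k)) summable_on UNIV" by (rule stencil_split(1)[OF M])
  have "\<bar>corr g_off (W_of U) i\<bar> \<le> infsum (\<lambda>k. \<bar>g_off k * W_of U (i + k)\<bar>) UNIV"
    unfolding corr_def using norm_infsum_bound[of "\<lambda>k. g_off k * W_of U (i + k)" UNIV]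
      summable_on_abs_real[OF terms] by simp
  also have "\<dots> \<le> infsum (\<lambda>k. g_off k * M) UNIV"
    by (rule infsum_mono[OF summable_on_abs_real[OF terms]
          summable_on_cmult_left[OF g_off_summable]])
       (simp add: abs_mult g_off_nonneg mult_left_mono M)
  also have "\<dots> = (- g 0) * M" using g_off_total by (simp add: infsum_cmult_left')
  finally have nonlocal: "\<bar>corr g_off (W_of U) i\<bar> \<le> (- g 0) * M" .
  have "D i + C i + b * dt/dx * (- g 0) \<le> 1" using D[of i] C[of i] cfl_split by linarith
  then have "\<bar>(1 - D i - C i - b * dt/dx * (- g 0)) * W_of U i + D i * W_of U (i - 1)
      + C i * W_of U (i + 1) + b * dt/dx * corr g_off (W_of U) i\<bar> \<le> M"
    using D[of i] C[of i] b_nonneg dx_pos dt_pos M nonlocal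
    by (intro convex_combination_abs_le) auto
  then show ?thesis unfolding update by (simp add: algebra_simps)
qed

text \<open>The differences X_i = W_{i+1} - W_i obey the recursion of the l1 contraction lemma.\<close>
lemma W_difference_update:
  obtains D C :: "int \<Rightarrow> real" where "\<And>i. 0 \<le> D i \<and> D i \<le> dt/dx * (p1 + al/dx)"
    and "\<And>i. 0 \<le> C i \<and> C i \<le> dt/dx * (p2 + al/dx)"
    and "\<And>i. W_of (advance U) (i + 1) - W_of (advance U) i
           = (1 - C i - D (i + 1) - b * dt/dx * (- g 0)) * (W_of U (i + 1) - W_of U i)
             + C (i + 1) * (W_of U (i + 2) - W_of U (i + 1))
             + D i * (W_of U i - W_of U (i - 1))
             + b * dt/dx * corr g_off (\<lambda>j. W_of U (j + 1) - W_of U j) i"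
proof -
  obtain D C where D: "\<And>i. 0 \<le> D i \<and> D i \<le> dt/dx * (p1 + al/dx)"
    and C: "\<And>i. 0 \<le> C i \<and> C i \<le> dt/dx * (p2 + al/dx)"
    and update: "\<And>i. W_of (advance U) i = W_of U i - D i * (W_of U i - W_of U (i - 1))
      + C i * (W_of U (i + 1) - W_of U i)
      + b * dt/dx * (corr g_off (W_of U) i - (- g 0) * W_of U i)"
    using W_update by blast
  obtain B where B: "\<And>m. \<bar>W_of U m\<bar> \<le> B" using W_bounded[OF U] by blast
  have corr_shift: "corr g_off (W_of U) (i + 1) - corr g_off (W_of U) i
      = corr g_off (\<lambda>j. W_of U (j + 1) - W_of U j) i" for i
    unfolding corr_def
    using infsum_diff[OF stencil_split(1)[where W="W_of U" and i="i
        + 1", OF B] stencil_split(1)[where W="W_of U" and i=i, OF B]]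
    by (simp add: algebra_simps)
  have "W_of (advance U) (i + 1) - W_of (advance U) i
           = (1 - C i - D (i + 1) - b * dt/dx * (- g 0)) * (W_of U (i + 1) - W_of U i)
             + C (i + 1) * (W_of U (i + 2) - W_of U (i + 1))
             + D i * (W_of U i - W_of U (i - 1))
             + b * dt/dx * corr g_off (\<lambda>j. W_of U (j + 1) - W_of U j) i" for i
    unfolding update corr_shift[symmetric] by (simp add: algebra_simps)
  then show ?thesis using that D C by blast
qed

lemma total_variation_step:
  "infsum (\<lambda>i. \<bar>W_of (advance U) (i + 1) - W_of (advance U) i\<bar>) UNIV
     \<le> infsum (\<lambda>i. \<bar>W_of U (i + 1) - W_of U i\<bar>) UNIV"
proof -
  obtain D C where D: "\<And>i. 0 \<le> D i \<and> D i \<le> dt/dx * (p1 + al/dx)"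
    and C: "\<And>i. 0 \<le> C i \<and> C i \<le> dt/dx * (p2 + al/dx)"
    and update: "\<And>i. W_of (advance U) (i + 1) - W_of (advance U) i
           = (1 - C i - D (i + 1) - b * dt/dx * (- g 0)) * (W_of U (i + 1) - W_of U i)
             + C (i + 1) * (W_of U (i + 2) - W_of U (i + 1))
             + D i * (W_of U i - W_of U (i - 1))
             + b * dt/dx * corr g_off (\<lambda>j. W_of U (j + 1) - W_of U j) i"
    using W_difference_update by blast
  have cfl_i: "C i + D (i + 1) + b * dt/dx * infsum g_off UNIV \<le> 1" for i
    unfolding g_off_total using C[of i] D[of "i + 1"] cfl_split by linarith
  have be: "b * dt/dx \<ge> 0" using b_nonneg dt_pos dx_pos by simp
  show ?thesis
    using l1_contraction[where D=D and C=C and be="b * dt/dx",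
        OF W_difference_summable[OF U] g_off_summable g_off_nonneg D C be cfl_i]
    unfolding update g_off_total by (simp add: ac_simps)
qed

end

end

context monotone_stencil_scheme
begin

lemma scheme_Suc:
  "scheme fh A (\<lambda>l j. g (j - l)) dx dt b U0 (Suc n)
     = advance (scheme fh A (\<lambda>l j. g (j - l)) dx dt b U0 n)"
  by (simp add: advance_def)

context
  fixes U0 :: "int \<Rightarrow> real"
  assumes U0: "U0 summable_on UNIV"
begin

abbreviation iterate :: "nat \<Rightarrow> int \<Rightarrow> real" where
  "iterate n \<equiv> scheme fh A (\<lambda>l j. g (j - l)) dx dt b U0 n"

lemma iterate_summable: "iterate n summable_on UNIV"
proof (induction n)
  case 0 then show ?case using U0 by simp
next
  case (Suc n) then show ?case unfolding scheme_Suc by (rule advance_summable)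
qed

lemma max_principle:
  assumes M: "\<And>i. \<bar>W_of U0 i\<bar> \<le> M"
  shows "\<bar>W_of (iterate n) i\<bar> \<le> M"
proof (induction n arbitrary: i)
  case 0 then show ?case using M by simp
next
  case (Suc n) then show ?case
    unfolding scheme_Suc using max_principle_step[OF iterate_summable] by blast
qed

lemma total_variation_bound:
  "infsum (\<lambda>i. \<bar>W_of (iterate n) (i + 1) - W_of (iterate n) i\<bar>) UNIV
     \<le> infsum (\<lambda>i. \<bar>W_of U0 (i + 1) - W_of U0 i\<bar>) UNIV"
proof (induction n)
  case 0 then show ?case by simp
next
  case (Suc n) then show ?case
    unfolding scheme_Suc using total_variation_step[OF iterate_summable, of n] by linarith
qed

text \<open>The same two bounds in extended nonnegative reals, where suprema and sums of
  unbounded or non-summable families are meaningful.\<close>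
lemma max_principle_ennreal:
  "(SUP i. ennreal \<bar>W_of (iterate n) i\<bar>) \<le> (SUP i. ennreal \<bar>W_of U0 i\<bar>)"
proof (cases "(SUP i. ennreal \<bar>W_of U0 i\<bar>) = top")
  case True then show ?thesis by (simp only: top_greatest)
next
  case False
  define M where "M = enn2real (SUP i. ennreal \<bar>W_of U0 i\<bar>)"
  have sup_eq: "(SUP i. ennreal \<bar>W_of U0 i\<bar>) = ennreal M"
    unfolding M_def using False by (metis ennreal_enn2real less_top)
  have "ennreal \<bar>W_of U0 i\<bar> \<le> ennreal M" for i
    unfolding sup_eq[symmetric] by (rule SUP_upper) simp
  then have "\<bar>W_of U0 i\<bar> \<le> M" for i
    using M_def by (simp add: ennreal_le_iff)
  then have "\<bar>W_of (iterate n) i\<bar> \<le> M" for i by (rule max_principle)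
  then show ?thesis unfolding sup_eq by (intro SUP_least ennreal_leI)
qed

lemma total_variation_bound_ennreal:
  "infsum (\<lambda>i. ennreal \<bar>W_of (iterate n) (i + 1) - W_of (iterate n) i\<bar>) UNIV
     \<le> infsum (\<lambda>i. ennreal \<bar>W_of U0 (i + 1) - W_of U0 i\<bar>) UNIV"
proof -
  have as_real: "infsum (\<lambda>i. ennreal \<bar>W_of V (i + 1) - W_of V i\<bar>) UNIV
      = ennreal (infsum (\<lambda>i. \<bar>W_of V (i + 1) - W_of V i\<bar>) UNIV)"
    if "V summable_on UNIV" for V
    by (rule infsum_ennreal_of_real)
       (use summable_on_abs_real[OF W_difference_summable[OF that]] in auto)
  show ?thesis
    unfolding as_real[OF iterate_summable] as_real[OF U0]
    by (rule ennreal_leI[OF total_variation_bound])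
qed

end

end

lemma indicator_times_eq_if: "(\<lambda>z. indicator S z * f z) = (\<lambda>z. if z \<in> S then f z else (0::real))"
  by (auto simp: fun_eq_iff)

lemma nn_integral_reflect:
  fixes f :: "real \<Rightarrow> ennreal"
  assumes [measurable]: "f \<in> borel_measurable borel"
  shows "(\<integral>\<^sup>+x. f x \<partial>lborel) = (\<integral>\<^sup>+x. f (- x) \<partial>lborel)"
  using nn_integral_real_affine[of f "-1" 0] by simp

lemma nn_integral_translate:
  fixes f :: "real \<Rightarrow> ennreal"
  assumes [measurable]: "f \<in> borel_measurable borel"
  shows "(\<integral>\<^sup>+x. f x \<partial>lborel) = (\<integral>\<^sup>+x. f (t + x) \<partial>lborel)"
  using nn_integral_real_affine[of f 1 t] by simp

lemma nn_integral_cmult_real: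
  fixes f :: "real \<Rightarrow> real"
  assumes [measurable]: "f \<in> borel_measurable borel" and c: "c \<ge> 0"
    and f: "\<And>x. f x \<ge> 0"
  shows "(\<integral>\<^sup>+x. ennreal (c * f x) \<partial>lborel) = ennreal c * (\<integral>\<^sup>+x. ennreal (f x) \<partial>lborel)"
  using c f by (simp add: ennreal_mult nn_integral_cmult)

lemma nn_integral_even_part:
  fixes f :: "real \<Rightarrow> real"
  assumes [measurable]: "f \<in> borel_measurable borel" and f0: "\<And>z. f z \<ge> 0"
  shows "(\<integral>\<^sup>+z. ennreal (f z + f (- z)) \<partial>lborel) = 2 * (\<integral>\<^sup>+z. ennreal (f z) \<partial>lborel)"
proof -
  have "(\<integral>\<^sup>+z. ennreal (f z + f (- z)) \<partial>lborel) = (\<integral>\<^sup>+z. ennreal (f z) + ennreal (f (- z)) \<partial>lborel)"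
    by (rule nn_integral_cong) (simp add: ennreal_plus f0)
  also have "\<dots> = (\<integral>\<^sup>+z. ennreal (f z) \<partial>lborel) + (\<integral>\<^sup>+z. ennreal (f (- z)) \<partial>lborel)"
    by (rule nn_integral_add) measurable
  also have "(\<integral>\<^sup>+z. ennreal (f (- z)) \<partial>lborel) = (\<integral>\<^sup>+z. ennreal (f z) \<partial>lborel)"
    by (rule nn_integral_reflect[symmetric]) measurable
  finally show ?thesis by (simp add: mult_2)
qed

lemma set_integral_nonneg_as_nn:
  fixes f :: "real \<Rightarrow> real"
  assumes [measurable]: "f \<in> borel_measurable borel" "S \<in> sets borel"
    and f0: "\<And>z. f z \<ge> 0"
  shows "(LINT z:S|lborel. f z) = enn2real (\<integral>\<^sup>+z. ennreal (indicator S z * f z) \<partial>lborel)"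
  unfolding set_lebesgue_integral_def by (subst integral_eq_nn_integral) (auto simp: f0)

lemma integral_indicator_enn2real:
  fixes F :: "real \<Rightarrow> ennreal"
  assumes [measurable]: "F \<in> borel_measurable borel" "S \<in> sets borel"
      and fin: "(\<integral>\<^sup>+x. ennreal (indicator S x) * F x \<partial>lborel) \<noteq> \<infinity>"
    and c: "c \<ge> 0"
  shows "(LINT x|lborel. indicator S x * (c * enn2real (F x))) = c
      * enn2real (\<integral>\<^sup>+x. ennreal (indicator S x) * F x \<partial>lborel)"
proof -
  have ae: "AE x in lborel. ennreal (indicator S x) * F x \<noteq> \<infinity>"
    by (rule nn_integral_PInf_AE) (use fin in auto)
  have "(LINT x|lborel. indicator S x * (c * enn2real (F x)))
      = enn2real (\<integral>\<^sup>+x. ennreal (indicator S x * (c * enn2real (F x))) \<partial>lborel)"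
    by (subst integral_eq_nn_integral) (auto simp: c)
  also have "(\<integral>\<^sup>+x. ennreal (indicator S x * (c * enn2real (F x))) \<partial>lborel)
      = (\<integral>\<^sup>+x. ennreal c * (ennreal (indicator S x) * F x) \<partial>lborel)"
  proof (rule nn_integral_cong_AE, rule eventually_mono[OF ae])
    fix x assume h: "ennreal (indicator S x) * F x \<noteq> \<infinity>"
    show "ennreal (indicator S x * (c * enn2real (F x)))
        = ennreal c * (ennreal (indicator S x) * F x)"
    proof (cases "x \<in> S")
      case True
      then have "F x \<noteq> \<infinity>" using h by simp
      then show ?thesis using True c by (simp add: ennreal_mult ennreal_enn2real_if)
    qed simp
  qed
  also have "\<dots> = ennreal c * (\<integral>\<^sup>+x. ennreal (indicator S x) * F x \<partial>lborel)"
    by (rule nn_integral_cmult) measurable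
  finally show ?thesis using c by (simp add: enn2real_mult)
qed

lemma nn_integral_powr_tail:
  fixes e t :: real assumes e: "e < -1" and t: "t > 0"
  shows "(\<integral>\<^sup>+z. ennreal (indicator {t..} z * z powr e) \<partial>lborel)
      = ennreal (- (t powr (e+1)) / (e+1))"
proof -
  have "((\<lambda>z. indicator {t..} z * z powr e) has_integral (- (t powr (e+1)) / (e+1))) UNIV"
    using has_integral_powr_to_inf[OF e t] has_integral_restrict_UNIV[of "{t..}" "\<lambda>z. z powr e"]
    unfolding indicator_times_eq_if by simp
  then show ?thesis
    by (intro nn_integral_has_integral_lborel) (auto simp: indicator_def)
qed

lemma nn_integral_powr_head:
  fixes a c :: real assumes a: "a > -1" and c: "c \<ge> 0"
  shows "(\<integral>\<^sup>+z. ennreal (indicator {0..c} z * z powr a) \<partial>lborel) = ennreal (c powr (a+1) / (a+1))"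
proof -
  have "((\<lambda>z. indicator {0..c} z * z powr a) has_integral (c powr (a+1) / (a+1))) UNIV"
    using has_integral_powr_from_0[OF a c] has_integral_restrict_UNIV[of "{0..c}" "\<lambda>z. z powr a"]
    unfolding indicator_times_eq_if by simp
  then show ?thesis
    by (intro nn_integral_has_integral_lborel) (auto simp: indicator_def)
qed

lemma nn_integral_powr_left_endpoint:
  assumes lam: "0 < lam" "lam < 1" and ab: "a < b"
  shows "(\<integral>\<^sup>+x. ennreal (indicator {a..<b} x * (x - a) powr (- lam)) \<partial>lborel)
      = ennreal ((b - a) powr (1 - lam) / (1 - lam))"
proof -
  have "(\<integral>\<^sup>+x. ennreal (indicator {a..<b} x * (x - a) powr (- lam)) \<partial>lborel)
      = (\<integral>\<^sup>+x. ennreal (indicator {a..<b} (a + x) * (a + x - a) powr (- lam)) \<partial>lborel)"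
    by (rule nn_integral_translate) measurable
  also have "\<dots> = (\<integral>\<^sup>+x. ennreal (indicator {0..b-a} x * x powr (- lam)) \<partial>lborel)"
    by (intro nn_integral_cong_AE eventually_mono[OF AE_lborel_singleton[of "b
        - a"]]) (auto simp: indicator_def)
  also have "\<dots> = ennreal ((b - a) powr (- lam + 1) / (- lam + 1))"
    by (rule nn_integral_powr_head) (use lam ab in auto)
  finally show ?thesis by (simp add: add.commute)
qed

lemma nn_integral_powr_right_endpoint:
  assumes lam: "0 < lam" "lam < 1" and ab: "a < b"
  shows "(\<integral>\<^sup>+x. ennreal (indicator {a..<b} x * (b - x) powr (- lam)) \<partial>lborel)
      = ennreal ((b - a) powr (1 - lam) / (1 - lam))"
proof -
  have "(\<integral>\<^sup>+x. ennreal (indicator {a..<b} x * (b - x) powr (- lam)) \<partial>lborel)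
      = (\<integral>\<^sup>+x. ennreal (indicator {a..<b} (b + x) * (b - (b + x)) powr (- lam)) \<partial>lborel)"
    by (rule nn_integral_translate) measurable
  also have "\<dots> = (\<integral>\<^sup>+x. ennreal (indicator {a..<b} (b + - x)
      * (b - (b + - x)) powr (- lam)) \<partial>lborel)"
    by (rule nn_integral_reflect) measurable
  also have "\<dots> = (\<integral>\<^sup>+x. ennreal (indicator {0..b-a} x * x powr (- lam)) \<partial>lborel)"
    by (intro nn_integral_cong_AE eventually_mono[OF AE_lborel_singleton[of 0]])
        (auto simp: indicator_def)
  also have "\<dots> = ennreal ((b - a) powr (- lam + 1) / (- lam + 1))"
    by (rule nn_integral_powr_head) (use lam ab in auto)
  finally show ?thesis by (simp add: add.commute)
qed


section \<open>The fractional kernel\<close>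

definition kernel :: "real \<Rightarrow> real \<Rightarrow> real" where "kernel lam z = 1 / \<bar>z\<bar> powr (1 + lam)"

lemma kernel_nonneg: "kernel lam z \<ge> 0" unfolding kernel_def by simp

lemma kernel_measurable[measurable]: "kernel lam \<in> borel_measurable borel"
  unfolding kernel_def by measurable

lemma kernel_even: "kernel lam (- z) = kernel lam z" unfolding kernel_def by simp

lemma nn_integral_kernel_right_tail:
  assumes lam: "0 < lam" and t: "t > 0"
  shows "(\<integral>\<^sup>+z. ennreal (indicator {t..} z * kernel lam z) \<partial>lborel)
      = ennreal (t powr (- lam) / lam)"
proof -
  have "(\<integral>\<^sup>+z. ennreal (indicator {t..} z * kernel lam z) \<partial>lborel)
      = (\<integral>\<^sup>+z. ennreal (indicator {t..} z * z powr (-1 - lam)) \<partial>lborel)"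
  proof (rule nn_integral_cong)
    fix z :: real
    show "ennreal (indicator {t..} z * kernel lam z)
        = ennreal (indicator {t..} z * z powr (-1 - lam))"
    proof (cases "t \<le> z")
      case True
      then have "z > 0" using t by linarith
      then have "kernel lam z = z powr (-1 - lam)"
        unfolding kernel_def by (simp add: powr_minus_divide[symmetric])
      then show ?thesis by simp
    qed simp
  qed
  also have "\<dots> = ennreal (- (t powr (-1 - lam + 1)) / (-1 - lam + 1))"
    by (rule nn_integral_powr_tail) (use lam t in auto)
  also have "- (t powr (-1 - lam + 1)) / (-1 - lam + 1) = t powr (- lam) / lam"
    by simp
  finally show ?thesis .
qed

lemma nn_integral_kernel_right_tail_open:
  assumes lam: "0 < lam" and t: "t > 0"
  shows "(\<integral>\<^sup>+z. ennreal (indicator {t<..} z * kernel lam z) \<partial>lborel)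
      = ennreal (t powr (- lam) / lam)"
proof -
  have "(\<integral>\<^sup>+z. ennreal (indicator {t<..} z * kernel lam z) \<partial>lborel)
      = (\<integral>\<^sup>+z. ennreal (indicator {t..} z * kernel lam z) \<partial>lborel)"
    by (intro nn_integral_cong_AE eventually_mono[OF AE_lborel_singleton[of t]])
        (auto simp: indicator_def)
  then show ?thesis using nn_integral_kernel_right_tail[OF assms] by simp
qed

lemma nn_integral_kernel_left_tail:
  assumes lam: "0 < lam" and t: "t > 0"
  shows "(\<integral>\<^sup>+z. ennreal (indicator {..<-t} z * kernel lam z) \<partial>lborel)
      = ennreal (t powr (- lam) / lam)"
proof -
  have "(\<integral>\<^sup>+z. ennreal (indicator {..<-t} z * kernel lam z) \<partial>lborel)
     = (\<integral>\<^sup>+z. ennreal (indicator {..<-t} (-z) * kernel lam (-z)) \<partial>lborel)"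
    by (rule nn_integral_reflect) measurable
  also have "\<dots> = (\<integral>\<^sup>+z. ennreal (indicator {t<..} z * kernel lam z) \<partial>lborel)"
    by (rule nn_integral_cong) (auto simp: kernel_even indicator_def)
  finally show ?thesis using nn_integral_kernel_right_tail_open[OF assms] by simp
qed

lemma nn_integral_kernel_outside_interval:
  assumes lam: "0 < lam" and x: "a < x" "x < b"
  shows "(\<integral>\<^sup>+z. ennreal ((1 - indicator {a..<b} (x + z)) * kernel lam z) \<partial>lborel)
       = ennreal (((x - a) powr (- lam) + (b - x) powr (- lam)) / lam)"
proof -
  have "(\<integral>\<^sup>+z. ennreal ((1 - indicator {a..<b} (x + z)) * kernel lam z) \<partial>lborel)
      = (\<integral>\<^sup>+z. ennreal (indicator {..<-(x-a)} z * kernel lam z)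
          + ennreal (indicator {b-x..} z * kernel lam z) \<partial>lborel)"
  proof (rule nn_integral_cong)
    fix z :: real
    have "(1 - indicator {a..<b} (x + z)) * kernel lam z = indicator {..<-(x-a)} z * kernel lam z
        + indicator {b-x..} z * kernel lam z"
      using x by (auto simp: indicator_def)
    then show "ennreal ((1 - indicator {a..<b} (x + z)) * kernel lam z)
        = ennreal (indicator {..<-(x-a)} z * kernel lam z)
            + ennreal (indicator {b-x..} z * kernel lam z)"
      by (simp add: ennreal_plus[symmetric] kernel_nonneg del: ennreal_plus)
  qed
  also have "\<dots> = (\<integral>\<^sup>+z. ennreal (indicator {..<-(x-a)} z * kernel lam z) \<partial>lborel)
      + (\<integral>\<^sup>+z. ennreal (indicator {b-x..} z * kernel lam z) \<partial>lborel)"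
    by (rule nn_integral_add) measurable
  also have "\<dots> = ennreal ((x - a) powr (- lam) / lam) + ennreal ((b - x) powr (- lam) / lam)"
    using nn_integral_kernel_left_tail[OF lam, of "x - a"]
      nn_integral_kernel_right_tail[OF lam, of "b - x"] x by simp
  also have "\<dots> = ennreal (((x - a) powr (- lam) + (b - x) powr (- lam)) / lam)"
    using lam by (simp add: ennreal_plus[symmetric] add_divide_distrib del: ennreal_plus)
  finally show ?thesis .
qed

lemma d_lam_value:
  assumes lam: "0 < lam" "lam < 1"
  shows "d_lam c lam = c * (2 / (1 - lam) + 2 / lam)"
proof -
  have m1: "(\<integral>\<^sup>+z. ennreal (indicator {z. \<bar>z\<bar> < 1} z * \<bar>z\<bar> powr (- lam)) \<partial>lborel)
      = ennreal (2 / (1 - lam))"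
  proof -
    have "(\<integral>\<^sup>+z. ennreal (indicator {z. \<bar>z\<bar> < 1} z * \<bar>z\<bar> powr (- lam)) \<partial>lborel)
       = (\<integral>\<^sup>+z. ennreal (indicator {0..1} z * z powr (- lam) + indicator {0..1} (- z)
           * (- z) powr (- lam)) \<partial>lborel)"
      by (intro nn_integral_cong_AE
          eventually_mono[OF
              eventually_conj[OF AE_lborel_singleton[of 1] AE_lborel_singleton[of "-1"]]])
         (auto simp: indicator_def)
    also have "\<dots> = 2 * (\<integral>\<^sup>+z. ennreal (indicator {0..1} z * z powr (- lam)) \<partial>lborel)"
      by (rule nn_integral_even_part) auto
    also have "\<dots> = 2 * ennreal (1 powr (- lam + 1) / (- lam + 1))"
      by (subst nn_integral_powr_head) (use lam in auto)
    finally show ?thesis using lam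
        by (simp add: ennreal_mult[symmetric] ennreal_numeral[symmetric] del: ennreal_numeral)
  qed
  have m2: "(\<integral>\<^sup>+z. ennreal (indicator {z. \<bar>z\<bar> > 1} z * \<bar>z\<bar> powr (- 1 - lam)) \<partial>lborel)
      = ennreal (2 / lam)"
  proof -
    have "(\<integral>\<^sup>+z. ennreal (indicator {z. \<bar>z\<bar> > 1} z * \<bar>z\<bar> powr (- 1 - lam)) \<partial>lborel)
       = (\<integral>\<^sup>+z. ennreal (indicator {1..} z * z powr (- 1 - lam) + indicator {1..} (- z)
           * (- z) powr (- 1 - lam)) \<partial>lborel)"
      by (intro nn_integral_cong_AE
          eventually_mono[OF
              eventually_conj[OF AE_lborel_singleton[of 1] AE_lborel_singleton[of "-1"]]])
         (auto simp: indicator_def)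
    also have "\<dots> = 2 * (\<integral>\<^sup>+z. ennreal (indicator {1..} z * z powr (- 1 - lam)) \<partial>lborel)"
      by (rule nn_integral_even_part) auto
    also have "\<dots> = 2 * ennreal (- (1 powr (- 1 - lam + 1)) / (- 1 - lam + 1))"
      by (subst nn_integral_powr_tail) (use lam in auto)
    finally show ?thesis using lam
        by (simp add: ennreal_mult[symmetric] ennreal_numeral[symmetric] del: ennreal_numeral)
  qed
  have "(LINT z:{z. \<bar>z\<bar> < 1}|lborel. \<bar>z\<bar> powr (- lam)) = 2 / (1 - lam)"
    by (subst set_integral_nonneg_as_nn) (use m1 lam in auto)
  moreover have "(LINT z:{z. \<bar>z\<bar> > 1}|lborel. \<bar>z\<bar> powr (- 1 - lam)) = 2 / lam"
    by (subst set_integral_nonneg_as_nn) (use m2 lam in auto)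
  ultimately show ?thesis unfolding d_lam_def by simp
qed

definition kernel_mass :: "real \<Rightarrow> real set \<Rightarrow> real \<Rightarrow> ennreal" where
  "kernel_mass lam E x = (\<integral>\<^sup>+z. ennreal (indicator E (x + z) * kernel lam z) \<partial>lborel)"

definition kernel_comass :: "real \<Rightarrow> real set \<Rightarrow> real \<Rightarrow> ennreal" where
  "kernel_comass lam E x = (\<integral>\<^sup>+z. ennreal ((1 - indicator E (x + z)) * kernel lam z) \<partial>lborel)"

lemma kernel_mass_measurable[measurable]:
  assumes [measurable]: "E \<in> sets borel"
  shows "kernel_mass lam E \<in> borel_measurable borel"
  unfolding kernel_mass_def by measurable

lemma kernel_comass_measurable[measurable]:
  assumes [measurable]: "E \<in> sets borel"
  shows "kernel_comass lam E \<in> borel_measurable borel"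
  unfolding kernel_comass_def by measurable

lemma interval_self_interaction:
  assumes lam: "0 < lam" "lam < 1" and ab: "a < b"
  shows "(\<integral>\<^sup>+x. ennreal (indicator {a..<b} x) * kernel_comass lam {a..<b} x \<partial>lborel)
     = ennreal (2 * (b - a) powr (1 - lam) / (lam * (1 - lam)))"
proof -
  define l where "l x = indicator {a..<b} x * (x - a) powr (- lam)" for x :: real
  define r where "r x = indicator {a..<b} x * (b - x) powr (- lam)" for x :: real
  define P where "P = (b - a) powr (1 - lam) / (1 - lam)"
  have l_meas[measurable]: "l \<in> borel_measurable borel" unfolding l_def by measurable
  have r_meas[measurable]: "r \<in> borel_measurable borel" unfolding r_def by measurable
  text \<open>Seen from x in (a, b), the complement has kernel mass ((x-a)^-lam + (b-x)^-lam)/lam.\<close>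
  have "(\<integral>\<^sup>+x. ennreal (indicator {a..<b} x) * kernel_comass lam {a..<b} x \<partial>lborel)
      = (\<integral>\<^sup>+x. ennreal ((1/lam) * (l x + r x)) \<partial>lborel)"
  proof (intro nn_integral_cong_AE eventually_mono[OF AE_lborel_singleton[of a]] impI)
    fix x assume "x \<noteq> a"
    show "ennreal (indicator {a..<b} x) * kernel_comass lam {a..<b} x
        = ennreal ((1/lam) * (l x + r x))"
    proof (cases "x \<in> {a..<b}")
      case True
      then have "a < x" "x < b" using \<open>x \<noteq> a\<close> by auto
      then show ?thesis
        unfolding kernel_comass_def l_def r_def
        using nn_integral_kernel_outside_interval[OF lam(1) \<open>a < x\<close> \<open>x < b\<close>] True
        by (simp add: field_simps)
    qed (simp add: l_def r_def)
  qed
  also have "\<dots> = ennreal (1/lam) * ((\<integral>\<^sup>+x. ennreal (l x) \<partial>lborel) + (\<integral>\<^sup>+x. ennreal (r x) \<partial>lborel))"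
  proof -
    have "(\<integral>\<^sup>+x. ennreal (l x + r x) \<partial>lborel)
        = (\<integral>\<^sup>+x. ennreal (l x) \<partial>lborel) + (\<integral>\<^sup>+x. ennreal (r x) \<partial>lborel)"
      by (subst nn_integral_add[symmetric]) (auto intro!: nn_integral_cong simp: l_def r_def)
    then show ?thesis using lam by (subst nn_integral_cmult_real) (auto simp: l_def r_def)
  qed
  also have "\<dots> = ennreal (1/lam) * (ennreal P + ennreal P)"
    using nn_integral_powr_left_endpoint[OF lam ab] nn_integral_powr_right_endpoint[OF lam ab]
    unfolding l_def r_def P_def by simp
  also have "\<dots> = ennreal (1/lam * (P + P))"
    using lam ab by (simp add: P_def ennreal_plus[symmetric] ennreal_mult[symmetric] del:
        ennreal_plus)
  also have "1/lam * (P + P) = 2 * (b - a) powr (1 - lam) / (lam * (1 - lam))"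
    unfolding P_def by (simp add: field_simps)
  finally show ?thesis .
qed

lemma set_integral_punctured:
  fixes f :: "real \<Rightarrow> real"
  assumes "f 0 = 0"
  shows "(LINT z:{z. \<bar>z\<bar> > 0}|lborel. f z) = (LINT z|lborel. f z)"
  unfolding set_lebesgue_integral_def
  by (rule Bochner_Integration.integral_cong) (use assms in \<open>auto simp: indicator_def\<close>)

lemma nonlocalL_indicator_outside:
  assumes [measurable]: "E \<in> sets borel" and x: "x \<notin> E"
  shows "nonlocalL c lam (indicator E) x = c * enn2real (kernel_mass lam E x)"
proof -
  have "(LINT z:{z. \<bar>z\<bar> > 0}|lborel. (indicator E (x + z) - indicator E x) / \<bar>z\<bar> powr (1 + lam))
      = (LINT z|lborel. indicator E (x + z) * kernel lam z)"
    by (subst set_integral_punctured) (use x in \<open>auto simp: kernel_def indicator_def\<close>)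
  also have "\<dots> = enn2real (kernel_mass lam E x)"
    unfolding kernel_mass_def by (subst integral_eq_nn_integral) (auto simp: kernel_nonneg)
  finally show ?thesis unfolding nonlocalL_def by simp
qed

lemma nonlocalL_indicator_inside:
  assumes [measurable]: "E \<in> sets borel" and x: "x \<in> E"
  shows "nonlocalL c lam (indicator E) x = - c * enn2real (kernel_comass lam E x)"
proof -
  have "(LINT z:{z. \<bar>z\<bar> > 0}|lborel. (indicator E (x + z) - indicator E x) / \<bar>z\<bar> powr (1 + lam))
      = (LINT z|lborel. (indicator E (x + z) - indicator E x) / \<bar>z\<bar> powr (1 + lam))"
    by (rule set_integral_punctured) simp
  also have "\<dots> = (LINT z|lborel. - ((1 - indicator E (x + z)) * kernel lam z))"
    by (rule Bochner_Integration.integral_cong) (use x in \<open>auto simp: kernel_def indicator_def\<close>)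
  also have "\<dots> = - (LINT z|lborel. (1 - indicator E (x + z)) * kernel lam z)"
    by (rule integral_minus)
  also have "(LINT z|lborel. (1 - indicator E (x + z)) * kernel lam z)
      = enn2real (kernel_comass lam E x)"
    unfolding kernel_comass_def
    by (subst integral_eq_nn_integral) (auto simp: kernel_nonneg indicator_def)
  finally show ?thesis unfolding nonlocalL_def by simp
qed


section \<open>Translation invariance and sign structure of the weights\<close>

lemma cell_borel[measurable]: "cell dx i \<in> sets borel" unfolding cell_def by simp

lemma cell_disjoint: "i \<noteq> j \<Longrightarrow> y \<in> cell dx j \<Longrightarrow> dx > 0 \<Longrightarrow> y \<notin> cell dx i"
proof -
  assume ij: "i \<noteq> j" and yj: "y \<in> cell dx j" and dx: "dx > 0"
  show "y \<notin> cell dx i"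
  proof
    assume yi: "y \<in> cell dx i"
    have "real_of_int j * dx < (real_of_int i + 1) * dx"
      and "real_of_int i * dx < (real_of_int j + 1) * dx"
      using yi yj unfolding cell_def by auto
    then have "real_of_int j < real_of_int i + 1" "real_of_int i < real_of_int j + 1"
      using dx by (simp_all add: mult_less_cancel_right)
    then show False using ij by linarith
  qed
qed

lemma cell_shift: "y + real_of_int k * dx \<in> cell dx (j + k) \<longleftrightarrow> y \<in> cell dx j"
  unfolding cell_def by (auto simp: algebra_simps)

lemma indicator_cell_floor:
  assumes dx: "dx > 0"
  shows "indicator (cell dx j) y = (if \<lfloor>y / dx\<rfloor> = j then 1 else (0::real))"
proof -
  have "y \<in> cell dx j \<longleftrightarrow> \<lfloor>y / dx\<rfloor> = j"
    unfolding cell_def floor_eq_iff using dx by (auto simp: pos_le_divide_eq pos_divide_less_eq)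
  then show ?thesis by (simp add: indicator_def)
qed

lemma sum_indicator_cells:
  assumes dx: "dx > 0" and F: "finite F"
  shows "(\<Sum>j\<in>F. indicator (cell dx j) y) = (if \<lfloor>y / dx\<rfloor> \<in> F then 1 else (0::real))"
  unfolding indicator_cell_floor[OF dx] using F by (simp add: sum.delta)

definition cell_interaction :: "real \<Rightarrow> real \<Rightarrow> int \<Rightarrow> int \<Rightarrow> ennreal" where
  "cell_interaction lam dx i j = (\<integral>\<^sup>+x. ennreal (indicator (cell dx i) x)
      * kernel_mass lam (cell dx j) x \<partial>lborel)"

definition cell_self_interaction :: "real \<Rightarrow> real \<Rightarrow> int \<Rightarrow> ennreal" where
  "cell_self_interaction lam dx i = (\<integral>\<^sup>+x. ennreal (indicator (cell dx i) x)
      * kernel_comass lam (cell dx i) x \<partial>lborel)"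

lemma cell_self_interaction_value:
  assumes lam: "0 < lam" "lam < 1" and dx: "dx > 0"
  shows "cell_self_interaction lam dx i = ennreal (2 * dx powr (1 - lam) / (lam * (1 - lam)))"
proof -
  have "cell_self_interaction lam dx i
      = ennreal (2 * ((real_of_int i + 1) * dx - real_of_int i * dx) powr (1 - lam) /
          (lam * (1 - lam)))"
    unfolding cell_self_interaction_def cell_def
    by (rule interval_self_interaction[OF lam]) (use dx in \<open>simp add: algebra_simps\<close>)
  then show ?thesis by (simp add: algebra_simps)
qed

lemma kernel_mass_le_comass:
  assumes "i \<noteq> j" "dx > 0"
  shows "kernel_mass lam (cell dx j) x \<le> kernel_comass lam (cell dx i) x"
  unfolding kernel_mass_def kernel_comass_def
  by (intro nn_integral_mono ennreal_leI mult_right_mono kernel_nonneg)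
     (use cell_disjoint[OF assms(1)] assms(2) in \<open>auto simp: indicator_def\<close>)

lemma cell_interaction_le:
  assumes "i \<noteq> j" "dx > 0"
  shows "cell_interaction lam dx i j \<le> cell_self_interaction lam dx i"
  unfolding cell_interaction_def cell_self_interaction_def
  by (intro nn_integral_mono mult_left_mono kernel_mass_le_comass assms) auto

lemma Gw_offdiag:
  assumes lam: "0 < lam" "lam < 1" and dx: "dx > 0" and c: "c \<ge> 0" and ij: "i \<noteq> j"
  shows "Gw c lam dx i j = c * enn2real (cell_interaction lam dx i j)"
proof -
  have fin: "cell_interaction lam dx i j \<noteq> \<infinity>"
    using cell_interaction_le[OF ij dx, of lam] cell_self_interaction_value[OF lam dx, of i]
    by (auto simp: top_unique)
  have "Gw c lam dx i j = (LINT x|lborel. indicator (cell dx i) x * (c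
      * enn2real (kernel_mass lam (cell dx j) x)))"
    unfolding Gw_def set_lebesgue_integral_def
    by (rule Bochner_Integration.integral_cong)
       (use nonlocalL_indicator_outside cell_disjoint[OF ij[symmetric] _ dx]
         in \<open>auto simp: indicator_def\<close>)
  also have "\<dots> = c * enn2real (cell_interaction lam dx i j)"
    unfolding cell_interaction_def
    by (rule integral_indicator_enn2real) (use fin c in \<open>auto simp: cell_interaction_def\<close>)
  finally show ?thesis .
qed

lemma Gw_diag:
  assumes lam: "0 < lam" "lam < 1" and dx: "dx > 0" and c: "c \<ge> 0"
  shows "Gw c lam dx i i = - c * (2 * dx powr (1 - lam) / (lam * (1 - lam)))"
proof -
  have fin: "cell_self_interaction lam dx i \<noteq> \<infinity>"
    using cell_self_interaction_value[OF lam dx, of i] by simp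
  have "Gw c lam dx i i = (LINT x|lborel. - (indicator (cell dx i) x * (c
      * enn2real (kernel_comass lam (cell dx i) x))))"
    unfolding Gw_def set_lebesgue_integral_def
    by (rule Bochner_Integration.integral_cong)
        (use nonlocalL_indicator_inside in \<open>auto simp: indicator_def\<close>)
  also have "\<dots> = - (c * enn2real (cell_self_interaction lam dx i))"
    unfolding cell_self_interaction_def
    by (subst integral_minus, subst integral_indicator_enn2real)
            (use fin c in \<open>auto simp: cell_self_interaction_def\<close>)
  finally show ?thesis using cell_self_interaction_value[OF lam dx, of i] lam dx by simp
qed

lemma cell_interaction_shift:
  "cell_interaction lam dx (i + k) (j + k) = cell_interaction lam dx i j"
proof -
  have "cell_interaction lam dx (i + k) (j + k)
      = (\<integral>\<^sup>+x. ennreal (indicator (cell dx (i+k)) (real_of_int k * dx + x))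
          * kernel_mass lam (cell dx (j+k)) (real_of_int k * dx + x) \<partial>lborel)"
    unfolding cell_interaction_def by (rule nn_integral_translate) measurable
  also have "\<dots> = cell_interaction lam dx i j"
    unfolding cell_interaction_def
  proof (rule nn_integral_cong)
    fix x
    have "indicator (cell dx (i+k)) (real_of_int k * dx + x) = (indicator (cell dx i) x :: real)"
      using cell_shift[of x k dx i] by (simp add: indicator_def add.commute)
    moreover have "kernel_mass lam (cell dx (j+k)) (real_of_int k * dx + x)
        = kernel_mass lam (cell dx j) x"
      unfolding kernel_mass_def
    proof (rule nn_integral_cong)
      fix z
      have "indicator (cell dx (j+k)) (real_of_int k * dx + x + z)
          = (indicator (cell dx j) (x + z) :: real)"
        using cell_shift[of "x + z" k dx j] by (simp add: indicator_def add_ac)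
      then show "ennreal (indicator (cell dx (j+k)) (real_of_int k * dx + x + z) * kernel lam z)
          = ennreal (indicator (cell dx j) (x + z) * kernel lam z)"
        by simp
    qed
    ultimately show "ennreal (indicator (cell dx (i+k)) (real_of_int k * dx + x))
        * kernel_mass lam (cell dx (j+k)) (real_of_int k * dx + x)
        = ennreal (indicator (cell dx i) x) * kernel_mass lam (cell dx j) x" by simp
  qed
  finally show ?thesis .
qed

lemma Gw_translation_invariant:
  assumes lam: "0 < lam" "lam < 1" and dx: "dx > 0" and c: "c \<ge> 0"
  shows "Gw c lam dx i j = Gw c lam dx 0 (j - i)"
proof (cases "i = j")
  case True then show ?thesis using Gw_diag[OF lam dx c] by simp
next
  case False
  have "cell_interaction lam dx i j = cell_interaction lam dx (0 + i) ((j - i) + i)" by simp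
  also have "\<dots> = cell_interaction lam dx 0 (j - i)" by (rule cell_interaction_shift)
  finally show ?thesis
    using Gw_offdiag[OF lam dx c False] Gw_offdiag[OF lam dx c, of 0 "j - i"] False by simp
qed


section \<open>The weights of a row sum to zero\<close>

definition window_integrand :: "real \<Rightarrow> real \<Rightarrow> int set \<Rightarrow> real \<Rightarrow> real \<Rightarrow> ennreal" where
  "window_integrand lam dx F x z = ennreal (indicator (cell dx 0) x
      * (\<Sum>j\<in>F. indicator (cell dx j) (x + z)) * kernel lam z)"

lemma window_integrand_measurable[measurable]: "(\<lambda>(x, z). window_integrand lam dx F x z) \<in>
    borel_measurable (lborel \<Otimes>\<^sub>M lborel)"
  unfolding window_integrand_def by measurable

lemma cell_interaction_iterated:
  "cell_interaction lam dx 0 j = (\<integral>\<^sup>+x. \<integral>\<^sup>+z. ennreal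
      (indicator (cell dx 0) x * indicator (cell dx j) (x + z) * kernel lam z) \<partial>lborel \<partial>lborel)"
  unfolding cell_interaction_def kernel_mass_def
  by (intro nn_integral_cong)
     (simp add: nn_integral_cmult[symmetric] ennreal_mult kernel_nonneg mult.assoc)

lemma cell_self_interaction_iterated:
  "cell_self_interaction lam dx 0 = (\<integral>\<^sup>+x. \<integral>\<^sup>+z. ennreal
      (indicator (cell dx 0) x * (1 - indicator (cell dx 0) (x + z)) * kernel lam z)
        \<partial>lborel \<partial>lborel)"
  unfolding cell_self_interaction_def kernel_comass_def
  by (intro nn_integral_cong)
     (simp add: nn_integral_cmult[symmetric] ennreal_mult kernel_nonneg mult.assoc indicator_def)

lemma sum_cell_interaction:
  assumes F: "finite F"
  shows "(\<Sum>j\<in>F. cell_interaction lam dx 0 j)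
      = (\<integral>\<^sup>+x. \<integral>\<^sup>+z. window_integrand lam dx F x z \<partial>lborel \<partial>lborel)"
proof -
  have "(\<Sum>j\<in>F. cell_interaction lam dx 0 j)
      = (\<integral>\<^sup>+x.
          (\<Sum>j\<in>F. \<integral>\<^sup>+z. ennreal
              (indicator (cell dx 0) x * indicator (cell dx j) (x + z) * kernel lam z) \<partial>lborel)
                  \<partial>lborel)"
    unfolding cell_interaction_iterated by (rule nn_integral_sum[symmetric]) measurable
  also have "\<dots> = (\<integral>\<^sup>+x. \<integral>\<^sup>+z. window_integrand lam dx F x z \<partial>lborel \<partial>lborel)"
  proof (rule nn_integral_cong)
    fix x
    have "(\<Sum>j\<in>F. \<integral>\<^sup>+z. ennreal (indicator (cell dx 0) x * indicator (cell dx j) (x + z)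
        * kernel lam z) \<partial>lborel)
       = (\<integral>\<^sup>+z. (\<Sum>j\<in>F. ennreal (indicator (cell dx 0) x * indicator (cell dx j) (x + z)
           * kernel lam z)) \<partial>lborel)"
      by (rule nn_integral_sum[symmetric]) measurable
    also have "\<dots> = (\<integral>\<^sup>+z. window_integrand lam dx F x z \<partial>lborel)"
      unfolding window_integrand_def
      by (rule nn_integral_cong) (simp add: kernel_nonneg sum_distrib_left sum_distrib_right)
    finally show "(\<Sum>j\<in>F. \<integral>\<^sup>+z. ennreal
        (indicator (cell dx 0) x * indicator (cell dx j) (x + z) * kernel lam z) \<partial>lborel)
       = (\<integral>\<^sup>+z. window_integrand lam dx F x z \<partial>lborel)" .
  qed
  finally show ?thesis .
qed

lemma window_integrand_le:
  assumes dx: "dx > 0" and F: "finite F" "0 \<notin> F"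
  shows "window_integrand lam dx F x z \<le> ennreal (indicator (cell dx 0) x * (1
      - indicator (cell dx 0) (x + z)) * kernel lam z)"
  unfolding window_integrand_def sum_indicator_cells[OF dx F(1)]
  by (intro ennreal_leI mult_right_mono mult_left_mono kernel_nonneg)
     (use F(2) indicator_cell_floor[OF dx, of 0 "x + z"] in \<open>auto simp: indicator_def\<close>)

lemma sum_cell_interaction_le:
  assumes dx: "dx > 0" and F: "finite F" "0 \<notin> F"
  shows "(\<Sum>j\<in>F. cell_interaction lam dx 0 j) \<le> cell_self_interaction lam dx 0"
  unfolding sum_cell_interaction[OF F(1)] cell_self_interaction_iterated
  by (intro nn_integral_mono window_integrand_le[OF dx F])

definition window :: "nat \<Rightarrow> int set" where "window n = {- int n .. int n} - {0}"

lemma window_finite: "finite (window n)" "0 \<notin> window n" unfolding window_def by auto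

lemma window_mono: "m \<le> n \<Longrightarrow> window m \<subseteq> window n" unfolding window_def by auto

lemma window_integrand_mono:
  assumes "m \<le> n"
  shows "window_integrand lam dx (window m) x z \<le> window_integrand lam dx (window n) x z"
  unfolding window_integrand_def
  by (intro ennreal_leI mult_right_mono mult_left_mono sum_mono2 window_finite window_mono assms
      kernel_nonneg)
     (auto simp: indicator_def)

lemma SUP_eventually_const_ennreal:
  assumes "\<exists>n. P n" and mono: "\<And>m n. m \<le> n \<Longrightarrow> P m \<Longrightarrow> P n"
  shows "(SUP n::nat. (if P n then a else (0::ennreal))) = a"
proof (rule antisym)
  show "(SUP n. if P n then a else 0) \<le> a" by (rule SUP_least) auto
  obtain n where "P n" using assms(1) by blast
  then show "a \<le> (SUP n. if P n then a else 0)" by (intro SUP_upper2[of n]) auto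
qed

lemma window_integrand_SUP:
  assumes dx: "dx > 0"
  shows "(SUP n. window_integrand lam dx (window n) x z)
      = ennreal (indicator (cell dx 0) x * (1 - indicator (cell dx 0) (x + z)) * kernel lam z)"
proof -
  define m where "m = \<lfloor>(x + z) / dx\<rfloor>"
  define a where "a = ennreal (indicator (cell dx 0) x * kernel lam z)"
  have e: "window_integrand lam dx (window n) x z = (if m \<in> window n then a else 0)" for n
    unfolding window_integrand_def sum_indicator_cells[OF dx window_finite(1)] m_def[symmetric]
        a_def by simp
  show ?thesis
  proof (cases "m = 0")
    case True
    then have "m \<notin> window n" for n unfolding window_def by simp
    moreover have "indicator (cell dx 0) (x + z) = (1::real)"
      using indicator_cell_floor[OF dx, of 0 "x + z"] True m_def by simp
    ultimately show ?thesis unfolding e by simp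
  next
    case False
    have "indicator (cell dx 0) (x + z) = (0::real)"
      using indicator_cell_floor[OF dx, of 0 "x + z"] False m_def by simp
    moreover have "(SUP n. (if m \<in> window n then a else 0)) = a"
    proof (rule SUP_eventually_const_ennreal)
      show "\<exists>n. m \<in> window n" using False by (intro exI[of _ "nat \<bar>m\<bar>"]) (auto simp: window_def)
    qed (use window_mono in blast)
    ultimately show ?thesis unfolding e a_def by simp
  qed
qed

text \<open>Monotone convergence: the off-diagonal interactions add up to the self-interaction.\<close>
lemma cell_self_interaction_SUP:
  assumes dx: "dx > 0"
  shows "(SUP n. \<Sum>j\<in>window n. cell_interaction lam dx 0 j) = cell_self_interaction lam dx 0"
proof -
  have inner: "(SUP n. \<integral>\<^sup>+z. window_integrand lam dx (window n) x z \<partial>lborel)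
      = (\<integral>\<^sup>+z. (SUP n. window_integrand lam dx (window n) x z) \<partial>lborel)" for x
    by (rule nn_integral_monotone_convergence_SUP[symmetric])
        (auto simp: incseq_def le_fun_def intro: window_integrand_mono)
  have "(SUP n. \<Sum>j\<in>window n. cell_interaction lam dx 0 j)
      = (SUP n. \<integral>\<^sup>+x. \<integral>\<^sup>+z. window_integrand lam dx (window n) x z \<partial>lborel \<partial>lborel)"
    by (simp add: sum_cell_interaction[OF window_finite(1)])
  also have "\<dots> = (\<integral>\<^sup>+x. (SUP n. \<integral>\<^sup>+z. window_integrand lam dx (window n) x z \<partial>lborel) \<partial>lborel)"
    by (rule nn_integral_monotone_convergence_SUP[symmetric])
       (auto simp: incseq_def le_fun_def intro!: nn_integral_mono window_integrand_mono)
  also have "\<dots> = cell_self_interaction lam dx 0"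
    unfolding cell_self_interaction_iterated inner window_integrand_SUP[OF dx] ..
  finally show ?thesis .
qed

context
  fixes c lam dx :: real
  assumes lam: "0 < lam" "lam < 1" and dx: "dx > 0" and c: "c > 0"
begin

lemma cell_interaction_finite: "j \<noteq> 0 \<Longrightarrow> cell_interaction lam dx 0 j < top"
  using cell_interaction_le[of 0 j dx lam] dx cell_self_interaction_value[OF lam dx, of 0]
  by (metis ennreal_less_top le_less_trans)

lemma Gw_stencil_offdiag_nonneg: "k \<noteq> 0 \<Longrightarrow> Gw c lam dx 0 k \<ge> 0"
  using Gw_offdiag[OF lam dx, of c 0 k] c by simp

lemma Gw_stencil_diag: "Gw c lam dx 0 0 = - c * (2 * dx powr (1 - lam) / (lam * (1 - lam)))"
  using Gw_diag[OF lam dx, of c 0] c by simp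

lemma Gw_stencil_finite_sum:
  assumes F: "finite F" "0 \<notin> F"
  shows "ennreal (\<Sum>k\<in>F. Gw c lam dx 0 k) = ennreal c * (\<Sum>j\<in>F. cell_interaction lam dx 0 j)"
proof -
  have nz: "\<And>i. i \<in> F \<Longrightarrow> i \<noteq> 0" using F(2) by auto
  have c0: "c \<ge> 0" using c by simp
  have "(\<Sum>k\<in>F. Gw c lam dx 0 k) = (\<Sum>k\<in>F. c * enn2real (cell_interaction lam dx 0 k))"
    by (rule sum.cong) (use nz Gw_offdiag[OF lam dx c0, of 0] in auto)
  also have "\<dots> = c * (\<Sum>k\<in>F. enn2real (cell_interaction lam dx 0 k))" by (simp add: sum_distrib_left)
  also have "(\<Sum>k\<in>F. enn2real (cell_interaction lam dx 0 k))
      = enn2real (\<Sum>j\<in>F. cell_interaction lam dx 0 j)"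
    using enn2real_sum[of F "cell_interaction lam dx 0"] nz cell_interaction_finite
    by (simp add: comp_def)
  finally have "(\<Sum>k\<in>F. Gw c lam dx 0 k) = c * enn2real (\<Sum>j\<in>F. cell_interaction lam dx 0 j)" .
  moreover have "(\<Sum>j\<in>F. cell_interaction lam dx 0 j) \<noteq> top"
    using sum_cell_interaction_le[OF dx F, of lam] cell_self_interaction_value[OF lam dx, of 0]
    by (auto simp: top_unique)
  ultimately show ?thesis using c by (simp add: ennreal_mult ennreal_enn2real_if)
qed

lemma Gw_stencil_diag_ennreal:
  "ennreal c * cell_self_interaction lam dx 0 = ennreal (- Gw c lam dx 0 0)"
  unfolding Gw_stencil_diag cell_self_interaction_value[OF lam dx]
  using c lam dx by (subst ennreal_mult[symmetric]) auto

lemma Gw_stencil_finite_sum_le: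
  assumes F: "finite F" "0 \<notin> F"
  shows "sum (Gw c lam dx 0) F \<le> - Gw c lam dx 0 0"
proof -
  have "ennreal (sum (Gw c lam dx 0) F) = ennreal c * (\<Sum>j\<in>F. cell_interaction lam dx 0 j)"
    by (rule Gw_stencil_finite_sum[OF F])
  also have "\<dots> \<le> ennreal c * cell_self_interaction lam dx 0"
    by (intro mult_left_mono sum_cell_interaction_le[OF dx F]) simp
  finally show ?thesis
    unfolding Gw_stencil_diag_ennreal using Gw_stencil_diag c lam dx
    by (simp add: ennreal_le_iff)
qed

lemma Gw_stencil_offdiag_summable: "Gw c lam dx 0 summable_on (UNIV - {0})"
  by (rule nonneg_bdd_above_summable_on)
     (use Gw_stencil_offdiag_nonneg Gw_stencil_finite_sum_le in \<open>auto intro!: bdd_aboveI\<close>)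

text \<open>The off-diagonal weights of a row sum exactly to the diagonal defect.  The upper bound
  comes from finite partial sums, the lower bound from the exhausting windows.\<close>
lemma Gw_stencil_offdiag_sum: "infsum (Gw c lam dx 0) (UNIV - {0}) = - Gw c lam dx 0 0"
proof -
  let ?g = "Gw c lam dx 0" and ?T = "UNIV - {0::int}"
  let ?S = "SUP F\<in>{F. finite F \<and> F \<subseteq> ?T}. ennreal (sum ?g F)"
  have "ennreal (infsum ?g ?T) = ?S"
    by (rule infsum_nonneg_is_SUPREMUM_ennreal[OF Gw_stencil_offdiag_summable])
       (use Gw_stencil_offdiag_nonneg in auto)
  also have "?S = ennreal (- ?g 0)"
  proof (rule antisym)
    show "?S \<le> ennreal (- ?g 0)"
      by (rule SUP_least) (use Gw_stencil_finite_sum_le in \<open>auto intro: ennreal_leI\<close>)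
    have "ennreal (- ?g 0) = (SUP n. ennreal c * (\<Sum>j\<in>window n. cell_interaction lam dx 0 j))"
      unfolding Gw_stencil_diag_ennreal[symmetric] cell_self_interaction_SUP[OF dx, symmetric]
      by (rule SUP_mult_left_ennreal)
    also have "\<dots> = (SUP n. ennreal (sum ?g (window n)))"
      using Gw_stencil_finite_sum[OF window_finite] by simp
    also have "\<dots> \<le> ?S"
      by (intro SUP_least SUP_upper) (use window_finite in auto)
    finally show "ennreal (- ?g 0) \<le> ?S" .
  qed
  finally have "ennreal (infsum ?g ?T) = ennreal (- ?g 0)" .
  moreover have "infsum ?g ?T \<ge> 0"
    by (rule infsum_nonneg) (use Gw_stencil_offdiag_nonneg in auto)
  moreover have "- ?g 0 \<ge> 0" using Gw_stencil_diag c lam dx by simp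
  ultimately show ?thesis by simp
qed

lemma Gw_stencil_summable: "Gw c lam dx 0 summable_on UNIV"
proof -
  have "UNIV = insert (0::int) (UNIV - {0})" by auto
  then show ?thesis using Gw_stencil_offdiag_summable summable_on_insert_iff by metis
qed

lemma Gw_stencil_total: "infsum (Gw c lam dx 0) UNIV = 0"
proof -
  have "UNIV = insert (0::int) (UNIV - {0})" by auto
  then have "infsum (Gw c lam dx 0) UNIV = Gw c lam dx 0 0 + infsum (Gw c lam dx 0) (UNIV - {0})"
    using infsum_insert[OF Gw_stencil_offdiag_summable, of 0] by simp
  then show ?thesis using Gw_stencil_offdiag_sum by simp
qed

end

section \<open>Slope bounds for the fluxes\<close>

lemma deriv_abs_le_lipschitz:
  fixes f :: "real \<Rightarrow> real"
  assumes d: "DERIV f x :> l" and L: "\<And>s t. \<bar>f s - f t\<bar> \<le> L * \<bar>s - t\<bar>"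
  shows "\<bar>l\<bar> \<le> L"
proof -
  have t: "((\<lambda>h. \<bar>(f (x + h) - f x) / h\<bar>) \<longlongrightarrow> \<bar>l\<bar>) (at 0)"
    using d unfolding DERIV_def by (rule tendsto_rabs)
  show ?thesis
  proof (rule tendsto_upperbound[OF t])
    show "\<forall>\<^sub>F h in at 0. \<bar>(f (x + h) - f x) / h\<bar> \<le> L"
    proof (rule eventually_mono[OF eventually_neq_at_within[of "0::real"]])
      fix h :: real assume h: "h \<noteq> 0"
      have "\<bar>f (x + h) - f x\<bar> \<le> L * \<bar>h\<bar>" using L[of "x + h" x] by simp
      then show "\<bar>(f (x + h) - f x) / h\<bar> \<le> L" using h by (simp add: abs_divide divide_le_eq)
    qed
  qed simp
qed

lemma deriv_nonneg_of_mono: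
  fixes f :: "real \<Rightarrow> real"
  assumes d: "DERIV f x :> l" and m: "\<And>s t. s \<le> t \<Longrightarrow> f s \<le> f t"
  shows "0 \<le> l"
proof -
  have t: "((\<lambda>h. (f (x + h) - f x) / h) \<longlongrightarrow> l) (at 0)" using d unfolding DERIV_def .
  show ?thesis
  proof (rule tendsto_lowerbound[OF t])
    show "\<forall>\<^sub>F h in at 0. 0 \<le> (f (x + h) - f x) / h"
    proof (rule eventually_mono[OF eventually_neq_at_within[of "0::real"]])
      fix h :: real assume h: "h \<noteq> 0"
      show "0 \<le> (f (x + h) - f x) / h"
      proof (cases "h > 0")
        case True then show ?thesis using m[of x "x + h"] by simp
      next
        case False then have "h < 0" using h by simp
        then show ?thesis using m[of "x + h" x] by (simp add: divide_nonpos_neg)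
      qed
    qed
  qed simp
qed

lemma mvt_slope_bounded:
  fixes f f' :: "real \<Rightarrow> real"
  assumes d: "\<And>x. DERIV f x :> f' x" and nn: "\<And>x. 0 \<le> f' x" and P: "\<And>x. f' x \<le> P"
  shows "\<exists>q. 0 \<le> q \<and> q \<le> P \<and> f b - f a = q * (b - a)"
proof (cases a b rule: linorder_cases)
  case less
  obtain z where "f b - f a = (b - a) * f' z" using MVT2[OF less d] by blast
  then show ?thesis using nn[of z] P[of z] by (intro exI[of _ "f' z"]) (simp add: mult.commute)
next
  case equal then show ?thesis using nn[of a] P[of a] by (intro exI[of _ 0]) simp
next
  case greater
  obtain z where "f a - f b = (a - b) * f' z" using MVT2[OF greater d] by blast
  then have "f b - f a = f' z * (b - a)" by (simp add: algebra_simps)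
  then show ?thesis using nn[of z] P[of z] by (intro exI[of _ "f' z"]) simp
qed

lemma lipschitz_partial:
  assumes "L-lipschitz_on UNIV (\<lambda>p::real\<times>real. fh (fst p) (snd p))"
  shows "\<bar>fh s y - fh t y\<bar> \<le> L * \<bar>s - t\<bar>" and "\<bar>fh x s - fh x t\<bar> \<le> L * \<bar>s - t\<bar>"
proof -
  show "\<bar>fh s y - fh t y\<bar> \<le> L * \<bar>s - t\<bar>"
    using lipschitz_onD[OF assms, of "(s, y)" "(t, y)"] by (simp add: dist_Pair_Pair dist_real_def)
  show "\<bar>fh x s - fh x t\<bar> \<le> L * \<bar>s - t\<bar>"
    using lipschitz_onD[OF assms, of "(x, s)" "(x, t)"] by (simp add: dist_Pair_Pair dist_real_def)
qed

lemma fh_slope_first: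
  assumes C1: "C1_2 fh" and lip: "L-lipschitz_on UNIV (\<lambda>p::real\<times>real. fh (fst p) (snd p))"
    and m1: "\<forall>x y z. x \<le> y \<longrightarrow> fh x z \<le> fh y z"
  shows "\<exists>q. 0 \<le> q \<and> q \<le> (SUP p::real\<times>real. \<bar>partial1 fh (fst p) (snd p)\<bar>)
           \<and> fh x' y - fh x y = q * (x' - x)"
proof -
  have d: "DERIV (\<lambda>s. fh s y) s :> partial1 fh s y" for s y
    using C1 unfolding C1_2_def partial1_def by (simp add: DERIV_deriv_iff_real_differentiable)
  have b: "\<bar>partial1 fh s y\<bar> \<le> L" for s y
    by (rule deriv_abs_le_lipschitz[OF d lipschitz_partial(1)[OF lip]])
  have bdd: "bdd_above (range (\<lambda>p::real\<times>real. \<bar>partial1 fh (fst p) (snd p)\<bar>))"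
    by (rule bdd_aboveI[of _ L]) (use b in auto)
  have up: "partial1 fh s y \<le> (SUP p::real\<times>real. \<bar>partial1 fh (fst p) (snd p)\<bar>)" for s y
    using cSUP_upper[OF UNIV_I bdd, of "(s, y)"] by simp
  have nn: "0 \<le> partial1 fh s y" for s y by (rule deriv_nonneg_of_mono[OF d]) (use m1 in auto)
  show ?thesis by (rule mvt_slope_bounded[OF d nn up])
qed

lemma fh_slope_second:
  assumes C1: "C1_2 fh" and lip: "L-lipschitz_on UNIV (\<lambda>p::real\<times>real. fh (fst p) (snd p))"
    and m2: "\<forall>x y z. x \<le> y \<longrightarrow> fh z x \<ge> fh z y"
  shows "\<exists>q. 0 \<le> q \<and> q \<le> (SUP p::real\<times>real. \<bar>partial2 fh (fst p) (snd p)\<bar>)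
           \<and> fh x y' - fh x y = - q * (y' - y)"
proof -
  have d0: "DERIV (\<lambda>s. fh x s) s :> partial2 fh x s" for s x
    using C1 unfolding C1_2_def partial2_def by (simp add: DERIV_deriv_iff_real_differentiable)
  have d: "DERIV (\<lambda>s. - fh x s) s :> - partial2 fh x s" for s x by (rule DERIV_minus[OF d0])
  have b: "\<bar>partial2 fh x s\<bar> \<le> L" for s x
    by (rule deriv_abs_le_lipschitz[OF d0 lipschitz_partial(2)[OF lip]])
  have bdd: "bdd_above (range (\<lambda>p::real\<times>real. \<bar>partial2 fh (fst p) (snd p)\<bar>))"
    by (rule bdd_aboveI[of _ L]) (use b in auto)
  have up: "- partial2 fh x s \<le> (SUP p::real\<times>real. \<bar>partial2 fh (fst p) (snd p)\<bar>)" for s x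
    using cSUP_upper[OF UNIV_I bdd, of "(x, s)"] by simp
  have nn: "0 \<le> - partial2 fh x s" for s x by (rule deriv_nonneg_of_mono[OF d]) (use m2 in auto)
  obtain q where "0 \<le> q \<and> q \<le> (SUP p::real\<times>real. \<bar>partial2 fh (fst p) (snd p)\<bar>)
      \<and> (- fh x y') - (- fh x y) = q * (y' - y)"
    using mvt_slope_bounded[OF d nn up] by blast
  then show ?thesis by (intro exI[of _ q]) (auto simp: algebra_simps)
qed

lemma Aint_has_derivative:
  assumes ca: "continuous_on UNIV a"
  shows "DERIV (Aint a) x :> a x"
proof -
  define lo where "lo = min 0 x - 1"
  define hi where "hi = max 0 x + 1"
  have "((\<lambda>u. interval_lebesgue_integral lborel (ereal 0) (ereal u) a) has_vector_derivative a x)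
      (at x within {lo..hi})"
    using interval_integral_FTC2[of lo 0 hi a x] continuous_on_subset[OF ca, of "{lo..hi}"]
    by (auto simp: lo_def hi_def)
  moreover have "at x within {lo..hi} = at x"
    by (rule at_within_interior) (auto simp: lo_def hi_def)
  ultimately have "((\<lambda>u. interval_lebesgue_integral lborel (ereal 0) (ereal u) a)
      has_vector_derivative a x) (at x)" by simp
  then show ?thesis unfolding Aint_def by (simp add: has_real_derivative_iff_has_vector_derivative)
qed

lemma Aint_slope:
  assumes ca: "continuous_on UNIV a" and nn: "\<forall>s. a s \<ge> 0" and bd: "bounded (range a)"
  shows "\<exists>q. 0 \<le> q \<and> q \<le> (SUP s. \<bar>a s\<bar>) \<and> Aint a v - Aint a u = q * (v - u)"
proof -
  obtain B where B: "\<And>s. \<bar>a s\<bar> \<le> B" using bd unfolding bounded_real by auto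
  have bdd: "bdd_above (range (\<lambda>s. \<bar>a s\<bar>))" by (rule bdd_aboveI[of _ B]) (use B in auto)
  have up: "a s \<le> (SUP s. \<bar>a s\<bar>)" for s using cSUP_upper[OF UNIV_I bdd, of s] by simp
  show ?thesis by (rule mvt_slope_bounded[OF Aint_has_derivative[OF ca]]) (use nn up in auto)
qed

lemma Aint_zero: "Aint a 0 = 0" unfolding Aint_def by (simp add: zero_ereal_def)

lemma cell_abs_integrals_summable:
  fixes u0 :: "real \<Rightarrow> real"
  assumes dx: "dx > 0" and u0: "integrable lborel u0"
  shows "(\<lambda>i. LINT x:cell dx i|lborel. \<bar>u0 x\<bar>) summable_on UNIV"
proof -
  define h where "h i = (LINT x:cell dx i|lborel. \<bar>u0 x\<bar>)" for i
  have cell_integrable: "integrable lborel (\<lambda>x. indicator (cell dx i) x *\<^sub>R \<bar>u0 x\<bar>)" for i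
    by (rule integrable_mult_indicator) (auto intro: integrable_abs u0)
  have h_nonneg: "h i \<ge> 0" for i
    unfolding h_def set_lebesgue_integral_def by (rule Bochner_Integration.integral_nonneg) auto
  text \<open>The cells are disjoint, so finite partial sums are bounded by the L1 norm of u0.\<close>
  have "sum h F \<le> (LINT x|lborel. \<bar>u0 x\<bar>)" if F: "finite F" for F
  proof -
    have "sum h F = (LINT x|lborel. (\<Sum>i\<in>F. indicator (cell dx i) x *\<^sub>R \<bar>u0 x\<bar>))"
      unfolding h_def set_lebesgue_integral_def
      by (rule Bochner_Integration.integral_sum[symmetric]) (use cell_integrable in auto)
    also have "\<dots> \<le> (LINT x|lborel. \<bar>u0 x\<bar>)"
    proof (rule integral_mono)
      show "integrable lborel (\<lambda>x. \<Sum>i\<in>F. indicator (cell dx i) x *\<^sub>R \<bar>u0 x\<bar>)"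
        using cell_integrable by auto
      show "integrable lborel (\<lambda>x. \<bar>u0 x\<bar>)" by (rule integrable_abs[OF u0])
      fix x
      have "(\<Sum>i\<in>F. indicator (cell dx i) x *\<^sub>R \<bar>u0 x\<bar>) = (\<Sum>i\<in>F. indicator (cell dx i) x) * \<bar>u0 x\<bar>"
        by (simp add: sum_distrib_right)
      also have "\<dots> \<le> 1 * \<bar>u0 x\<bar>"
        by (rule mult_right_mono) (auto simp: sum_indicator_cells[OF dx F])
      finally show "(\<Sum>i\<in>F. indicator (cell dx i) x *\<^sub>R \<bar>u0 x\<bar>) \<le> \<bar>u0 x\<bar>" by simp
    qed
    finally show ?thesis .
  qed
  then show ?thesis unfolding h_def[symmetric]
    by (intro nonneg_bdd_above_summable_on bdd_aboveI) (use h_nonneg in auto)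
qed

lemma U_init_summable:
  fixes u0 :: "real \<Rightarrow> real"
  assumes dx: "dx > 0" and u0: "integrable lborel u0"
  shows "U_init dx u0 summable_on UNIV"
proof (rule summable_on_comparison_real)
  show "(\<lambda>i. (1/dx) * (LINT x:cell dx i|lborel. \<bar>u0 x\<bar>)) summable_on UNIV"
    by (rule summable_on_cmult_right[OF cell_abs_integrals_summable[OF dx u0]])
  fix i
  have "set_integrable lborel (cell dx i) u0"
    unfolding set_integrable_def by (rule integrable_mult_indicator) (auto simp: u0)
  then have "\<bar>LINT x:cell dx i|lborel. u0 x\<bar> \<le> (LINT x:cell dx i|lborel. \<bar>u0 x\<bar>)"
    using set_integral_norm_bound by fastforce
  then show "\<bar>U_init dx u0 i\<bar> \<le> (1/dx) * (LINT x:cell dx i|lborel. \<bar>u0 x\<bar>)"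
    unfolding U_init_def using dx by (simp add: abs_mult divide_right_mono)
qed

lemma cfl_nonlocal_term:
  assumes lam: "0 < lam" "lam < 1" and dx: "dx > 0" and c: "c > 0"
  shows "b * d_lam c lam * dt / dx powr lam = b * dt / dx * (- Gw c lam dx 0 0)"
proof -
  have powr_split: "dx powr (1 - lam) = dx / dx powr lam" using dx by (simp add: powr_diff)
  have fractions: "2 / (1 - lam) + 2 / lam = 2 / (lam * (1 - lam))"
    using lam by (simp add: field_simps)
  have "dx powr lam > 0" using dx by simp
  then show ?thesis
    unfolding Gw_stencil_diag[OF lam dx c] d_lam_value[OF lam] fractions powr_split
    using dx lam by (simp add: field_simps)
qed

lemma scheme_is_monotone_stencil_scheme:
  fixes a :: "real \<Rightarrow> real" and fh :: "real \<Rightarrow> real \<Rightarrow> real"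
  assumes a_lip: "\<exists>L. L-lipschitz_on UNIV a" and a_nonneg: "\<forall>s. a s \<ge> 0"
    and a_bdd: "bounded (range a)" and b_nonneg: "b \<ge> 0"
    and lam: "0 < lam" "lam < 1" and c_pos: "c > 0"
    and fh_C1: "C1_2 fh"
    and fh_lip: "\<exists>L. L-lipschitz_on UNIV (\<lambda>p::real \<times> real. fh (fst p) (snd p))"
    and fh_zero: "fh 0 0 = 0"
    and fh_mono1: "\<forall>x y z. x \<le> y \<longrightarrow> fh x z \<le> fh y z"
    and fh_mono2: "\<forall>x y z. x \<le> y \<longrightarrow> fh z x \<ge> fh z y"
    and dx_pos: "dx > 0" and dt_pos: "dt > 0"
    and CFL: "dt / dx * ((SUP p::real \<times> real. \<bar>partial1 fh (fst p) (snd p)\<bar>)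
                       + (SUP p::real \<times> real. \<bar>partial2 fh (fst p) (snd p)\<bar>))
              + 2 * dt / dx\<^sup>2 * (SUP s. \<bar>a s\<bar>)
              + b * d_lam c lam * dt / dx powr lam \<le> 1"
  shows "monotone_stencil_scheme fh (Aint a) (Gw c lam dx 0) dx dt b
           (SUP p::real \<times> real. \<bar>partial1 fh (fst p) (snd p)\<bar>)
           (SUP p::real \<times> real. \<bar>partial2 fh (fst p) (snd p)\<bar>) (SUP s. \<bar>a s\<bar>)"
proof
  obtain L where lip: "L-lipschitz_on UNIV (\<lambda>p::real \<times> real. fh (fst p) (snd p))"
    using fh_lip by blast
  obtain La where "La-lipschitz_on UNIV a" using a_lip by blast
  then have a_cont: "continuous_on UNIV a" by (rule lipschitz_on_continuous_on)
  show "\<exists>q. 0 \<le> q \<and> q \<le> (SUP p::real \<times> real. \<bar>partial1 fh (fst p) (snd p)\<bar>)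
          \<and> fh x' y - fh x y = q * (x' - x)" for x x' y
    by (rule fh_slope_first[OF fh_C1 lip fh_mono1])
  show "\<exists>q. 0 \<le> q \<and> q \<le> (SUP p::real \<times> real. \<bar>partial2 fh (fst p) (snd p)\<bar>)
          \<and> fh x y' - fh x y = - q * (y' - y)" for x y y'
    by (rule fh_slope_second[OF fh_C1 lip fh_mono2])
  show "\<exists>q. 0 \<le> q \<and> q \<le> (SUP s. \<bar>a s\<bar>) \<and> Aint a v - Aint a u = q * (v - u)" for u v
    by (rule Aint_slope[OF a_cont a_nonneg a_bdd])
  show "Aint a 0 = 0" by (rule Aint_zero)
  show "Gw c lam dx 0 summable_on UNIV" by (rule Gw_stencil_summable[OF lam dx_pos c_pos])
  show "infsum (Gw c lam dx 0) UNIV = 0" by (rule Gw_stencil_total[OF lam dx_pos c_pos])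
  show "\<And>k. k \<noteq> 0 \<Longrightarrow> 0 \<le> Gw c lam dx 0 k"
    by (rule Gw_stencil_offdiag_nonneg[OF lam dx_pos c_pos])
  show "dt / dx * ((SUP p::real \<times> real. \<bar>partial1 fh (fst p) (snd p)\<bar>)
          + (SUP p::real \<times> real. \<bar>partial2 fh (fst p) (snd p)\<bar>))
        + 2 * dt / dx\<^sup>2 * (SUP s. \<bar>a s\<bar>) + b * dt / dx * - Gw c lam dx 0 0 \<le> 1"
    using CFL cfl_nonlocal_term[OF lam dx_pos c_pos, of b dt] by simp
qed (use fh_zero dx_pos dt_pos b_nonneg in auto)

theorem mainTheorem7:
  fixes f a u0 :: "real \<Rightarrow> real"
    and fh :: "real \<Rightarrow> real \<Rightarrow> real"
    and b lam c dx dt :: real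
  assumes f_lip: "\<exists>L. L-lipschitz_on UNIV f"
    and a_lip: "\<exists>L. L-lipschitz_on UNIV a"
    and a_nonneg: "\<forall>s. a s \<ge> 0"
    and a_bdd: "bounded (range a)"
    and f0: "f 0 = 0"
    and b_nonneg: "b \<ge> 0"
    and lam: "0 < lam" "lam < 1"
    and c_pos: "c > 0"
    and fh_C1: "C1_2 fh"
    and fh_lip: "\<exists>L. L-lipschitz_on UNIV (\<lambda>p::real \<times> real. fh (fst p) (snd p))"
    and fh_cons: "\<forall>u. fh u u = f u"
    and fh_mono1: "\<forall>x y z. x \<le> y \<longrightarrow> fh x z \<le> fh y z"
    and fh_mono2: "\<forall>x y z. x \<le> y \<longrightarrow> fh z x \<ge> fh z y"
    and dx_pos: "dx > 0" and dt_pos: "dt > 0"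
    and u0_L1: "integrable lborel u0"
    and u0_BV: "BV u0"
    and CFL: "dt / dx * ((SUP p::real \<times> real. \<bar>partial1 fh (fst p) (snd p)\<bar>)
                       + (SUP p::real \<times> real. \<bar>partial2 fh (fst p) (snd p)\<bar>))
              + 2 * dt / dx\<^sup>2 * (SUP s. \<bar>a s\<bar>)
              + b * d_lam c lam * dt / dx powr lam \<le> 1"
  shows "\<forall>n. (let G = Gw c lam dx; A = Aint a;
               U = scheme fh A G dx dt b (U_init dx u0);
               W = (\<lambda>m. Wq fh A G dx b (U m))
           in (SUP i. ennreal \<bar>W n i\<bar>) \<le> (SUP i. ennreal \<bar>W 0 i\<bar>)
            \<and> infsum (\<lambda>i. ennreal \<bar>W n (i + 1) - W n i\<bar>) UNIV
                \<le> infsum (\<lambda>i. ennreal \<bar>W 0 (i + 1) - W 0 i\<bar>) UNIV)"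
proof -
  define g where "g = Gw c lam dx 0"
  have fh_zero: "fh 0 0 = 0" using fh_cons f0 by simp
  interpret monotone_stencil_scheme fh "Aint a" g dx dt b
      "SUP p::real \<times> real. \<bar>partial1 fh (fst p) (snd p)\<bar>"
      "SUP p::real \<times> real. \<bar>partial2 fh (fst p) (snd p)\<bar>" "SUP s. \<bar>a s\<bar>"
    unfolding g_def
    using scheme_is_monotone_stencil_scheme[OF a_lip a_nonneg a_bdd b_nonneg lam c_pos fh_C1
        fh_lip fh_zero fh_mono1 fh_mono2 dx_pos dt_pos CFL] .
  have stencil: "Gw c lam dx = (\<lambda>l j. g (j - l))"
    unfolding g_def by (intro ext Gw_translation_invariant[OF lam dx_pos]) (use c_pos in simp)
  have U0: "U_init dx u0 summable_on UNIV" by (rule U_init_summable[OF dx_pos u0_L1])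
  show ?thesis
    using max_principle_ennreal[OF U0] total_variation_bound_ennreal[OF U0]
    unfolding Let_def stencil W_of_def by simp
qed

end
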